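(* Let $p>1$, $\frac1p+\frac1q=1$, $\sigma\in\mathbb{R}$, and let $h\geq0$ be measurable on $(0,\infty)$ with $k^{(1)}(\sigma):=\int_0^1 h(t)t^{\sigma-1}dt\in\mathbb{R}_+=(0,\infty)$. If $f,g\geq0$ are measurable on $(0,\infty)$ with $$0<\int_0^\infty x^{p(1-\sigma)-1}f^p(x)\,dx<\infty,\qquad 0<\int_0^\infty y^{q(1-\sigma)-1}g^q(y)\,dy<\infty,$$ then the following equivalent inequalities hold: $$\int_0^\infty\left(\int_0^{1/y}h(xy)f(x)dx\right)g(y)dy=\int_0^\infty\left(\int_0^{1/x}h(xy)g(y)dy\right)f(x)dx<k^{(1)}(\sigma)\left[\int_0^\infty x^{p(1-\sigma)-1}f^p(x)dx\right]^{\frac1p}\left[\int_0^\infty y^{q(1-\sigma)-1}g^q(y)dy\right]^{\frac1q},$$ $$\int_0^\infty y^{p\sigma-1}\left(\int_0^{1/y}h(xy)f(x)\,dx\right)^pdy<(k^{(1)}(\sigma))^p\int_0^\infty x^{p(1-\sigma)-1}f^p(x)\,dx,$$ where the constant factors $k^{(1)}(\sigma)$ and $(k^{(1)}(\sigma))^p$ are the best possible.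
   Context: A constant factor $C$ in an inequality "LHS $<C\cdot$RHS" (required for all admissible $f,g$) is best possible if no positive constant $k<C$ makes the inequality valid for all admissible $f,g$. Two inequalities are equivalent if each can be derived from the other. *)

theory Defs
  imports "HOL-Analysis.Analysis"
begin

text \<open>Real power of an extended nonnegative real (intended for exponent r > 0):
  infinity stays infinity.\<close>
definition epowr :: "ennreal \<Rightarrow> real \<Rightarrow> ennreal" where
  "epowr x r = (if x = \<infinity> then \<infinity> else ennreal (enn2real x powr r))"

definition wint :: "real \<Rightarrow> real \<Rightarrow> (real \<Rightarrow> real) \<Rightarrow> ennreal" where
  "wint e \<sigma> f = (\<integral>\<^sup>+ x\<in>{0<..}. ennreal (x powr (e * (1 - \<sigma>) - 1) * f x powr e) \<partial>lborel)"

definition admissible :: "real \<Rightarrow> real \<Rightarrow> (real \<Rightarrow> real) \<Rightarrow> bool" where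
  "admissible e \<sigma> f \<longleftrightarrow> set_borel_measurable lborel {0<..} f \<and> (\<forall>x>0. 0 \<le> f x)
     \<and> 0 < wint e \<sigma> f \<and> wint e \<sigma> f < \<infinity>"

definition inner_int :: "(real \<Rightarrow> real) \<Rightarrow> (real \<Rightarrow> real) \<Rightarrow> real \<Rightarrow> ennreal" where
  "inner_int h f y = (\<integral>\<^sup>+ x\<in>{0<..<1/y}. ennreal (h (x * y) * f x) \<partial>lborel)"

definition k1 :: "(real \<Rightarrow> real) \<Rightarrow> real \<Rightarrow> ennreal" where
  "k1 h \<sigma> = (\<integral>\<^sup>+ t\<in>{0<..<1}. ennreal (h t * t powr (\<sigma> - 1)) \<partial>lborel)"

end

theory Submission
  imports Defs
begin

text \<open>
  Substituting \<open>x = e^u\<close>, \<open>y = e^v\<close> turns \<open>h(xy)\<close> into a kernel \<open>K(u + v)\<close>, where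
  \<open>K(w) = h(e^w) e^(\<sigma> w)\<close> for \<open>w < 0\<close> and \<open>0\<close> otherwise, so that \<open>\<integral>K = k1(\<sigma>)\<close>;
  the weighted norms of \<open>f\<close> and \<open>g\<close> become the plain \<open>L^p\<close> and \<open>L^q\<close> norms of
  \<open>F(u) = f(e^u) e^((1 - \<sigma>) u)\<close> and of \<open>G\<close>. The bilinear form becomes \<open>\<integral> K (F * G)\<close>,
  and Hoelder bounds the convolution \<open>F * G\<close> pointwise by \<open>|F|_p |G|_q\<close>. Equality would
  force \<open>F(w - v)^p\<close> to be proportional to \<open>G(v)^q\<close> for almost every \<open>v\<close> at two different
  points \<open>w\<close>; then \<open>F^p\<close> is periodic and integrable, hence zero, so the inequality is strict.
  The power inequality follows by testing the bilinear one against \<open>H^(p - 1)\<close>, where \<open>H\<close> is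
  the inner integral. For the constants, \<open>f(x) = x^(\<sigma> - 1 + \<epsilon>/p)\<close> on \<open>(0, 1]\<close> and
  \<open>g(y) = y^(\<sigma> - 1 - \<epsilon>/q)\<close> on \<open>[1, \<infinity>)\<close> both have weighted norm \<open>1/\<epsilon>\<close>, the bilinear
  form equals \<open>k1(\<sigma> + \<epsilon>/p) / \<epsilon>\<close>, and \<open>k1(\<sigma> + \<epsilon>/p) \<rightarrow> k1(\<sigma>)\<close> by monotone convergence.
\<close>

section \<open>Young and Hoelder inequalities\<close>

lemma conjugate_exponent_gt_1:
  fixes p q :: real
  assumes "p > 1" "1/p + 1/q = 1"
  shows "q > 1"
proof -
  have "1/q = 1 - 1/p" using assms(2) by simp
  moreover have "0 < 1 - 1/p" "1 - 1/p < 1" using assms(1) by (auto simp: field_simps)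
  ultimately show ?thesis by (smt (verit) divide_less_eq_1 zero_less_divide_1_iff)
qed

lemma weighted_AM_GM_strict:
  fixes x y t :: real
  assumes "x > 0" "y > 0" "0 < t" "t < 1" "x \<noteq> y"
  shows "x powr t * y powr (1 - t) < t * x + (1 - t) * y"
proof -
  have sqrt_powr: "sqrt z powr s = z powr (s/2)" if "z > 0" for z s :: real
    using that by (simp add: powr_half_sqrt[symmetric] powr_powr)
  have "x powr t * y powr (1 - t) = (sqrt x powr t * sqrt y powr (1 - t))\<^sup>2"
    using assms by (simp add: sqrt_powr power_mult_distrib powr_power diff_divide_distrib)
  also have "\<dots> \<le> (t * sqrt x + (1 - t) * sqrt y)\<^sup>2"
    using Youngs_inequality_0[of t "1 - t" "sqrt x" "sqrt y"] assms by (intro power_mono) auto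
  also have "\<dots> = t * x + (1 - t) * y - t * (1 - t) * (sqrt x - sqrt y)\<^sup>2"
    using assms by (simp add: power2_eq_square algebra_simps)
  also have "\<dots> < t * x + (1 - t) * y"
    using assms by simp
  finally show ?thesis .
qed

lemma Youngs_inequality_strict:
  fixes a b p q :: real
  assumes pq: "p > 1" "1/p + 1/q = 1" and "a \<ge> 0" "b \<ge> 0" "a powr p \<noteq> b powr q"
  shows "a * b < a powr p / p + b powr q / q"
proof (cases "a = 0 \<or> b = 0")
  case True
  with assms conjugate_exponent_gt_1[OF pq] show ?thesis by auto
next
  case False
  with assms have "(a powr p) powr (1/p) * (b powr q) powr (1 - 1/p) < (1/p) * a powr p + (1 - 1/p) * b powr q"
    by (intro weighted_AM_GM_strict) auto
  moreover have "1 - 1/p = 1/q" using pq(2) by simp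
  ultimately show ?thesis
    using False assms conjugate_exponent_gt_1[OF pq] by (simp add: powr_powr)
qed

lemma Youngs_inequality_scaled:
  fixes a b p q A B :: real
  assumes pq: "p > 1" "1/p + 1/q = 1" and ab: "a \<ge> 0" "b \<ge> 0" and AB: "A > 0" "B > 0"
  defines "Y \<equiv> A powr (1/p) * B powr (1/q) * (a powr p / (p * A) + b powr q / (q * B))"
  shows "a * b \<le> Y" and "a * b = Y \<Longrightarrow> a powr p / A = b powr q / B"
proof -
  have q: "q > 1" using conjugate_exponent_gt_1[OF pq] .
  define \<alpha> where "\<alpha> = A powr (1/p)"
  define \<beta> where "\<beta> = B powr (1/q)"
  have \<alpha>\<beta>: "\<alpha> > 0" "\<beta> > 0" using AB by (auto simp: \<alpha>_def \<beta>_def)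
  have a_scaled: "(a / \<alpha>) powr p = a powr p / A" and b_scaled: "(b / \<beta>) powr q = b powr q / B"
    using pq q AB ab by (simp_all add: \<alpha>_def \<beta>_def powr_divide powr_powr)
  have prod: "a * b = \<alpha> * \<beta> * ((a / \<alpha>) * (b / \<beta>))" using \<alpha>\<beta> by simp
  have Y: "Y = \<alpha> * \<beta> * ((a / \<alpha>) powr p / p + (b / \<beta>) powr q / q)"
    unfolding Y_def \<alpha>_def[symmetric] \<beta>_def[symmetric] by (simp add: a_scaled b_scaled mult_ac)
  have "(a / \<alpha>) * (b / \<beta>) \<le> (a / \<alpha>) powr p / p + (b / \<beta>) powr q / q"
    using \<alpha>\<beta> ab by (intro Youngs_inequality[OF pq(1) q pq(2)]) auto
  then show "a * b \<le> Y"
    unfolding prod Y using \<alpha>\<beta> by (intro mult_left_mono) auto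
  show "a powr p / A = b powr q / B" if "a * b = Y"
  proof (rule ccontr)
    assume "a powr p / A \<noteq> b powr q / B"
    then have "(a / \<alpha>) * (b / \<beta>) < (a / \<alpha>) powr p / p + (b / \<beta>) powr q / q"
      using \<alpha>\<beta> ab by (intro Youngs_inequality_strict[OF pq]) (auto simp: a_scaled b_scaled)
    then show False using that \<alpha>\<beta> unfolding prod Y by simp
  qed
qed

lemma Young_majorant:
  fixes a b :: "'a \<Rightarrow> real" and p q A B :: real
  assumes pq: "p > 1" "1/p + 1/q = 1"
    and [measurable]: "a \<in> borel_measurable M" "b \<in> borel_measurable M"
    and a_nonneg: "\<And>x. a x \<ge> 0" and b_nonneg: "\<And>x. b x \<ge> 0"
    and A: "(\<integral>\<^sup>+x. ennreal (a x powr p) \<partial>M) = ennreal A" "A > 0"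
    and B: "(\<integral>\<^sup>+x. ennreal (b x powr q) \<partial>M) = ennreal B" "B > 0"
  obtains Y where "Y \<in> borel_measurable M"
    "(\<integral>\<^sup>+x. ennreal (Y x) \<partial>M) = ennreal (A powr (1/p) * B powr (1/q))"
    "\<And>x. a x * b x \<le> Y x"
    "\<And>x. a x * b x = Y x \<Longrightarrow> a x powr p / A = b x powr q / B"
proof
  have q: "q > 1" using conjugate_exponent_gt_1[OF pq] .
  define c where "c = A powr (1/p) * B powr (1/q)"
  have c: "c > 0" using A B by (simp add: c_def)
  define Y where "Y x = c * (a x powr p / (p * A) + b x powr q / (q * B))" for x
  show "Y \<in> borel_measurable M" unfolding Y_def by measurable
  show "a x * b x \<le> Y x" "a x * b x = Y x \<Longrightarrow> a x powr p / A = b x powr q / B" for x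
    unfolding Y_def c_def using Youngs_inequality_scaled[OF pq a_nonneg b_nonneg A(2) B(2)] by auto
  have "ennreal (Y x) = ennreal (c / (p * A)) * ennreal (a x powr p) + ennreal (c / (q * B)) * ennreal (b x powr q)" for x
  proof -
    have "Y x = c / (p * A) * a x powr p + c / (q * B) * b x powr q"
      by (simp add: Y_def distrib_left)
    also have "ennreal \<dots> = ennreal (c / (p * A)) * ennreal (a x powr p) + ennreal (c / (q * B)) * ennreal (b x powr q)"
      using c pq q A B
      by (simp only: ennreal_mult ennreal_plus divide_nonneg_pos mult_nonneg_nonneg powr_ge_zero
          mult_pos_pos less_imp_le zero_less_one order_less_trans)
    finally show ?thesis .
  qed
  then have "(\<integral>\<^sup>+x. ennreal (Y x) \<partial>M) = ennreal (c / (p * A)) * ennreal A + ennreal (c / (q * B)) * ennreal B"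
    by (simp add: nn_integral_add nn_integral_cmult A B)
  also have "\<dots> = ennreal (c * (1/p + 1/q))"
    using c pq q A B by (simp add: field_simps flip: ennreal_mult ennreal_plus)
  finally show "(\<integral>\<^sup>+x. ennreal (Y x) \<partial>M) = ennreal (A powr (1/p) * B powr (1/q))"
    using pq by (simp add: c_def)
qed

lemma nn_integral_eq_imp_AE_eq:
  fixes f g :: "'a \<Rightarrow> ennreal"
  assumes [measurable]: "f \<in> borel_measurable M" "g \<in> borel_measurable M"
    and le: "AE x in M. f x \<le> g x" and eq: "(\<integral>\<^sup>+x. f x \<partial>M) = (\<integral>\<^sup>+x. g x \<partial>M)"
    and fin: "(\<integral>\<^sup>+x. g x \<partial>M) < \<infinity>"
  shows "AE x in M. f x = g x"
proof -
  have "(\<integral>\<^sup>+x. g x - f x \<partial>M) = (\<integral>\<^sup>+x. g x \<partial>M) - (\<integral>\<^sup>+x. f x \<partial>M)"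
    using le eq fin by (intro nn_integral_diff) auto
  also have "\<dots> = 0" using eq fin by (simp add: diff_eq_0_iff_ennreal)
  finally have "AE x in M. g x - f x = 0" by (subst (asm) nn_integral_0_iff_AE) auto
  with le show ?thesis by eventually_elim (auto simp: ennreal_minus_eq_0 intro: antisym)
qed

lemma nn_integral_Holder:
  fixes a b :: "'a \<Rightarrow> real" and p q A B :: real
  assumes pq: "p > 1" "1/p + 1/q = 1"
    and [measurable]: "a \<in> borel_measurable M" "b \<in> borel_measurable M"
    and a_nonneg: "\<And>x. a x \<ge> 0" and b_nonneg: "\<And>x. b x \<ge> 0"
    and A: "(\<integral>\<^sup>+x. ennreal (a x powr p) \<partial>M) = ennreal A" "A \<ge> 0"
    and B: "(\<integral>\<^sup>+x. ennreal (b x powr q) \<partial>M) = ennreal B" "B \<ge> 0"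
  shows "(\<integral>\<^sup>+x. ennreal (a x * b x) \<partial>M) \<le> ennreal (A powr (1/p) * B powr (1/q))"
proof (cases "A = 0 \<or> B = 0")
  case True
  from True have "AE x in M. a x * b x = 0"
  proof
    assume "A = 0"
    then have "AE x in M. ennreal (a x powr p) = 0" using A by (subst nn_integral_0_iff_AE[symmetric]) auto
    then show ?thesis by eventually_elim simp
  next
    assume "B = 0"
    then have "AE x in M. ennreal (b x powr q) = 0" using B by (subst nn_integral_0_iff_AE[symmetric]) auto
    then show ?thesis by eventually_elim simp
  qed
  then have "(\<integral>\<^sup>+x. ennreal (a x * b x) \<partial>M) = 0"
    by (subst nn_integral_0_iff_AE) (auto elim: eventually_mono)
  then show ?thesis by simp
next
  case False
  with A B have "A > 0" "B > 0" by auto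
  then obtain Y where [measurable]: "Y \<in> borel_measurable M"
    and IY: "(\<integral>\<^sup>+x. ennreal (Y x) \<partial>M) = ennreal (A powr (1/p) * B powr (1/q))"
    and le: "\<And>x. a x * b x \<le> Y x" and "\<And>x. a x * b x = Y x \<Longrightarrow> a x powr p / A = b x powr q / B"
    using Young_majorant[OF pq assms(3,4) a_nonneg b_nonneg A(1) _ B(1)] by metis
  have "(\<integral>\<^sup>+x. ennreal (a x * b x) \<partial>M) \<le> (\<integral>\<^sup>+x. ennreal (Y x) \<partial>M)"
    by (intro nn_integral_mono ennreal_leI le)
  then show ?thesis unfolding IY .
qed

lemma nn_integral_Holder_eq_imp_AE:
  fixes a b :: "'a \<Rightarrow> real" and p q A B :: real
  assumes pq: "p > 1" "1/p + 1/q = 1"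
    and [measurable]: "a \<in> borel_measurable M" "b \<in> borel_measurable M"
    and a_nonneg: "\<And>x. a x \<ge> 0" and b_nonneg: "\<And>x. b x \<ge> 0"
    and A: "(\<integral>\<^sup>+x. ennreal (a x powr p) \<partial>M) = ennreal A" "A > 0"
    and B: "(\<integral>\<^sup>+x. ennreal (b x powr q) \<partial>M) = ennreal B" "B > 0"
    and eq: "(\<integral>\<^sup>+x. ennreal (a x * b x) \<partial>M) = ennreal (A powr (1/p) * B powr (1/q))"
  shows "AE x in M. a x powr p / A = b x powr q / B"
proof -
  obtain Y where [measurable]: "Y \<in> borel_measurable M"
    and IY: "(\<integral>\<^sup>+x. ennreal (Y x) \<partial>M) = ennreal (A powr (1/p) * B powr (1/q))"
    and le: "\<And>x. a x * b x \<le> Y x" and touch: "\<And>x. a x * b x = Y x \<Longrightarrow> a x powr p / A = b x powr q / B"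
    using Young_majorant[OF pq assms(3,4) a_nonneg b_nonneg A B] by metis
  have "AE x in M. ennreal (a x * b x) = ennreal (Y x)"
    using le eq IY by (intro nn_integral_eq_imp_AE_eq) (auto intro: ennreal_leI)
  then show ?thesis
  proof (rule eventually_mono)
    fix x assume "ennreal (a x * b x) = ennreal (Y x)"
    then have "a x * b x = Y x"
      using a_nonneg[of x] b_nonneg[of x] le[of x] by (subst (asm) ennreal_inj) (auto intro: order_trans[OF mult_nonneg_nonneg])
    then show "a x powr p / A = b x powr q / B" by (rule touch)
  qed
qed

lemma nn_integral_weighted_powr_le:
  fixes K F :: "'a \<Rightarrow> real" and p k :: real
  assumes p: "p > 1"
    and [measurable]: "K \<in> borel_measurable M" "F \<in> borel_measurable M"
    and K_nonneg: "\<And>x. K x \<ge> 0" and F_nonneg: "\<And>x. F x \<ge> 0"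
    and K: "(\<integral>\<^sup>+x. ennreal (K x) \<partial>M) = ennreal k" "k > 0"
  shows "epowr (\<integral>\<^sup>+x. ennreal (K x * F x) \<partial>M) p
           \<le> ennreal (k powr (p - 1)) * (\<integral>\<^sup>+x. ennreal (K x * F x powr p) \<partial>M)"
proof (cases "\<integral>\<^sup>+x. ennreal (K x * F x powr p) \<partial>M")
  case top
  then show ?thesis using K by (simp add: ennreal_mult_top)
next
  case (real m)
  define q where "q = p / (p - 1)"
  have pq: "1/p + 1/q = 1" and q: "q > 1" and pq': "p / q = p - 1"
    using p by (auto simp: q_def field_simps)
  define a where "a x = K x powr (1/p) * F x" for x
  define b where "b x = K x powr (1/q)" for x
  have [measurable]: "a \<in> borel_measurable M" "b \<in> borel_measurable M"
    unfolding a_def b_def by measurable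
  have "a x powr p = K x * F x powr p" for x
    using p K_nonneg[of x] F_nonneg[of x] by (simp add: a_def powr_mult powr_powr)
  then have A: "(\<integral>\<^sup>+x. ennreal (a x powr p) \<partial>M) = ennreal m" using real by simp
  have "b x powr q = K x" for x
    using q K_nonneg[of x] by (simp add: b_def powr_powr)
  then have B: "(\<integral>\<^sup>+x. ennreal (b x powr q) \<partial>M) = ennreal k" using K by simp
  have "a x * b x = K x * F x" for x
  proof -
    have "K x powr (1/p) * K x powr (1/q) = K x"
      using K_nonneg[of x] pq by (simp flip: powr_add)
    then show ?thesis by (simp add: a_def b_def mult_ac)
  qed
  then have "(\<integral>\<^sup>+x. ennreal (K x * F x) \<partial>M) = (\<integral>\<^sup>+x. ennreal (a x * b x) \<partial>M)"
    by simp
  also have "\<dots> \<le> ennreal (m powr (1/p) * k powr (1/q))"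
    using real K by (intro nn_integral_Holder[OF p pq _ _ _ _ A _ B]) (auto simp: a_def b_def F_nonneg)
  finally have "(\<integral>\<^sup>+x. ennreal (K x * F x) \<partial>M) \<le> ennreal (m powr (1/p) * k powr (1/q))" .
  then obtain r where r: "(\<integral>\<^sup>+x. ennreal (K x * F x) \<partial>M) = ennreal r" "0 \<le> r" "r \<le> m powr (1/p) * k powr (1/q)"
    by (cases "\<integral>\<^sup>+x. ennreal (K x * F x) \<partial>M") (auto simp: top_unique)
  have "epowr (\<integral>\<^sup>+x. ennreal (K x * F x) \<partial>M) p = ennreal (r powr p)"
    using r by (simp add: epowr_def)
  also have "\<dots> \<le> ennreal ((m powr (1/p) * k powr (1/q)) powr p)"
    using r p by (intro ennreal_leI powr_mono2) auto
  also have "(m powr (1/p) * k powr (1/q)) powr p = k powr (p - 1) * m"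
    using real p K by (simp add: powr_mult powr_powr pq' mult.commute)
  finally show ?thesis
    using real K by (simp add: ennreal_mult)
qed

section \<open>Integrals on the real line\<close>

lemma nn_integral_lborel_shift:
  fixes f :: "real \<Rightarrow> ennreal"
  assumes [measurable]: "f \<in> borel_measurable borel"
  shows "(\<integral>\<^sup>+x. f (x + c) \<partial>lborel) = (\<integral>\<^sup>+x. f x \<partial>lborel)"
  using nn_integral_real_affine[of f 1 c] by (simp add: add.commute)

lemma nn_integral_lborel_reflect:
  fixes f :: "real \<Rightarrow> ennreal"
  assumes [measurable]: "f \<in> borel_measurable borel"
  shows "(\<integral>\<^sup>+x. f (c - x) \<partial>lborel) = (\<integral>\<^sup>+x. f x \<partial>lborel)"
  using nn_integral_real_affine[of f "-1" c] by simp

lemma nn_integral_indicator_incseq_SUP: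
  fixes f :: "'a \<Rightarrow> ennreal"
  assumes "incseq A" "\<And>n. A n \<in> sets M" "f \<in> borel_measurable M"
  shows "(\<integral>\<^sup>+x. f x * indicator (\<Union>n. A n) x \<partial>M) = (SUP n. \<integral>\<^sup>+x. f x * indicator (A n) x \<partial>M)"
proof -
  have "(SUP n. f x * indicator (A n) x) = f x * indicator (\<Union>n. A n) x" for x
  proof (cases "x \<in> (\<Union>n. A n)")
    case True
    then obtain n0 where "x \<in> A n0" by blast
    then show ?thesis
      by (intro antisym SUP_least SUP_upper2[of n0]) (auto simp: indicator_def)
  qed (auto simp: indicator_def)
  moreover have "incseq (\<lambda>n x. f x * indicator (A n) x)"
    using \<open>incseq A\<close> by (auto simp: incseq_def le_fun_def indicator_def intro!: mult_left_mono)
  ultimately show ?thesis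
    using assms(2,3) by (simp flip: nn_integral_monotone_convergence_SUP)
qed

lemma nn_integral_exp_substitution:
  fixes f :: "real \<Rightarrow> ennreal"
  assumes [measurable]: "f \<in> borel_measurable borel"
  shows "(\<integral>\<^sup>+x\<in>{0<..}. f x \<partial>lborel) = (\<integral>\<^sup>+u. f (exp u) * ennreal (exp u) \<partial>lborel)"
proof -
  define I where "I n = {- real (Suc n)..real (Suc n)}" for n
  have "incseq I" by (auto simp: incseq_def I_def)
  have inc_exp: "incseq (\<lambda>n. {exp (- real (Suc n))..exp (real (Suc n))})"
    by (intro monoI) (simp add: atLeastatMost_subset_iff)
  have bound: "\<exists>n. - real (Suc n) \<le> t \<and> t \<le> real (Suc n)" for t :: real
  proof -
    obtain n where "\<bar>t\<bar> < real n" using reals_Archimedean2 by blast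
    then show ?thesis by (intro exI[of _ n]) auto
  qed
  then have UN_I: "(\<Union>n. I n) = UNIV" by (auto simp: I_def)
  have "x \<in> (\<Union>n. {exp (- real (Suc n))..exp (real (Suc n))})" if "x > 0" for x
  proof -
    obtain n where "- real (Suc n) \<le> ln x" "ln x \<le> real (Suc n)" using bound by blast
    then have "exp (- real (Suc n)) \<le> exp (ln x)" "exp (ln x) \<le> exp (real (Suc n))" by simp_all
    then show ?thesis using that by auto
  qed
  then have UN_exp: "(\<Union>n. {exp (- real (Suc n))..exp (real (Suc n))}) = {0<..}"
    by (auto intro: less_le_trans[OF exp_gt_zero])
  have "(\<integral>\<^sup>+x\<in>{0<..}. f x \<partial>lborel) = (SUP n. \<integral>\<^sup>+x. f x * indicator {exp (- real (Suc n))..exp (real (Suc n))} x \<partial>lborel)"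
    unfolding UN_exp[symmetric] by (rule nn_integral_indicator_incseq_SUP[OF inc_exp]) auto
  also have "\<dots> = (SUP n. \<integral>\<^sup>+u. f (exp u) * ennreal (exp u) * indicator (I n) u \<partial>lborel)"
    unfolding I_def
    by (intro SUP_cong refl nn_integral_substitution_aux)
      (auto intro!: DERIV_exp continuous_on_exp continuous_on_id)
  also have "\<dots> = (\<integral>\<^sup>+u. f (exp u) * ennreal (exp u) * indicator (\<Union>n. I n) u \<partial>lborel)"
    by (rule nn_integral_indicator_incseq_SUP[OF \<open>incseq I\<close>, symmetric]) (auto simp: I_def)
  also have "\<dots> = (\<integral>\<^sup>+u. f (exp u) * ennreal (exp u) \<partial>lborel)"
    by (simp add: UN_I)
  finally show ?thesis .
qed

lemma nn_integral_periodic_interval: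
  fixes \<Phi> :: "real \<Rightarrow> ennreal" and d :: real
  assumes [measurable]: "\<Phi> \<in> borel_measurable borel" and d: "d > 0"
    and periodic: "AE z in lborel. \<Phi> (z + d) = \<Phi> z"
  shows "(\<integral>\<^sup>+z. \<Phi> z * indicator {a..<a + real n * d} z \<partial>lborel)
    = of_nat n * (\<integral>\<^sup>+z. \<Phi> z * indicator {a..<a + d} z \<partial>lborel)"
proof -
  define S where "S a n = (\<integral>\<^sup>+z. \<Phi> z * indicator {a..<a + real n * d} z \<partial>lborel)" for a n
  have S_shift: "S (a + d) n = S a n" for a n
  proof -
    have "S (a + d) n = (\<integral>\<^sup>+z. \<Phi> (z + d) * indicator {a + d..<a + d + real n * d} (z + d) \<partial>lborel)"
      unfolding S_def by (rule nn_integral_lborel_shift[symmetric]) measurable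
    also have "\<dots> = S a n"
      unfolding S_def using periodic
      by (intro nn_integral_cong_AE) (auto elim!: eventually_mono simp: indicator_def)
    finally show ?thesis .
  qed
  have S_Suc: "S a (Suc n) = S a 1 + S (a + d) n" for a n
  proof -
    have split: "indicator {l..<u} z = (indicator {l..<m} z + indicator {m..<u} z :: ennreal)"
      if "l \<le> m" "m \<le> u" for l m u z :: real
      using that by (auto simp: indicator_def)
    have "a + real (Suc n) * d = a + d + real n * d" by (simp add: algebra_simps)
    then have "indicator {a..<a + real (Suc n) * d} z
        = (indicator {a..<a + d} z + indicator {a + d..<a + d + real n * d} z :: ennreal)" for z
      using d by (simp only:) (rule split, auto)
    then show ?thesis unfolding S_def by (simp add: distrib_left nn_integral_add)
  qed
  have "S a n = of_nat n * S a 1"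
  proof (induction n arbitrary: a)
    case (Suc n)
    have "S a (Suc n) = S a 1 + S (a + d) n" by (rule S_Suc)
    also have "\<dots> = S a 1 + of_nat n * S a 1" by (simp only: Suc.IH S_shift)
    finally show ?case by (simp add: algebra_simps)
  qed (simp add: S_def)
  then show ?thesis by (simp add: S_def)
qed

lemma nn_integral_periodic_eq_0:
  fixes \<Phi> :: "real \<Rightarrow> ennreal" and d :: real
  assumes [measurable]: "\<Phi> \<in> borel_measurable borel" and d: "d > 0"
    and periodic: "AE z in lborel. \<Phi> (z + d) = \<Phi> z"
    and finite: "(\<integral>\<^sup>+z. \<Phi> z \<partial>lborel) < \<infinity>"
  shows "(\<integral>\<^sup>+z. \<Phi> z \<partial>lborel) = 0"
proof -
  note interval = nn_integral_periodic_interval[OF assms(1-3)]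
  obtain c where c: "(\<integral>\<^sup>+z. \<Phi> z \<partial>lborel) = ennreal c" "c \<ge> 0"
    using finite by (cases "\<integral>\<^sup>+z. \<Phi> z \<partial>lborel") auto
  have le: "(\<integral>\<^sup>+z. \<Phi> z * indicator A z \<partial>lborel) \<le> ennreal c" for A
    unfolding c(1)[symmetric] by (intro nn_integral_mono) (simp add: indicator_def)
  have period_0: "(\<integral>\<^sup>+z. \<Phi> z * indicator {a..<a + d} z \<partial>lborel) = 0" for a
  proof -
    obtain s where s: "(\<integral>\<^sup>+z. \<Phi> z * indicator {a..<a + d} z \<partial>lborel) = ennreal s" "s \<ge> 0"
      using le[of "{a..<a + d}"] by (cases "\<integral>\<^sup>+z. \<Phi> z * indicator {a..<a + d} z \<partial>lborel") (auto simp: top_unique)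
    have "s = 0"
    proof (rule ccontr)
      assume "s \<noteq> 0"
      with s have "s > 0" by simp
      then obtain N :: nat where N: "c < real N * s" using ex_less_of_nat_mult by blast
      have "ennreal (real N * s) = (\<integral>\<^sup>+z. \<Phi> z * indicator {a..<a + real N * d} z \<partial>lborel)"
        using s by (simp add: interval ennreal_mult ennreal_of_nat_eq_real_of_nat)
      also have "\<dots> \<le> ennreal c" by (rule le)
      finally show False using N s c by (simp add: ennreal_le_iff2)
    qed
    with s show ?thesis by simp
  qed
  have "AE z in lborel. \<Phi> z * indicator {- real N * d..<real N * d} z = 0" for N
  proof -
    have "- real N * d + real (2 * N) * d = real N * d" by simp
    then have "(\<integral>\<^sup>+z. \<Phi> z * indicator {- real N * d..<real N * d} z \<partial>lborel) = 0"
      using interval[of "- real N * d" "2 * N"] period_0[of "- real N * d"] by (simp only: mult_zero_right)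
    then show ?thesis by (subst (asm) nn_integral_0_iff_AE) auto
  qed
  then have "AE z in lborel. \<forall>N::nat. \<Phi> z * indicator {- real N * d..<real N * d} z = 0"
    by (subst AE_all_countable) blast
  then have "AE z in lborel. \<Phi> z = 0"
  proof (rule eventually_mono)
    fix z assume vanish: "\<forall>N::nat. \<Phi> z * indicator {- real N * d..<real N * d} z = 0"
    obtain N :: nat where "\<bar>z\<bar> / d < real N" using reals_Archimedean2 by blast
    then have "z \<in> {- real N * d..<real N * d}"
      using d by (auto simp: field_simps abs_less_iff)
    then show "\<Phi> z = 0" using vanish[rule_format, of N] by simp
  qed
  then show ?thesis by (subst nn_integral_0_iff_AE) auto
qed

lemma not_AE_lborel_imp_two_points:
  fixes P :: "real \<Rightarrow> bool"
  assumes "\<not> (AE x in lborel. \<not> P x)"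
  shows "\<exists>x y. x < y \<and> P x \<and> P y"
proof (rule ccontr)
  assume "\<not> ?thesis"
  then obtain c where c: "\<And>x. P x \<Longrightarrow> x = c"
    by (metis linorder_neqE)
  have "AE x in lborel. \<not> P x"
    using AE_lborel_singleton[of c] by eventually_elim (use c in blast)
  with assms show False ..
qed

section \<open>Convolution inequalities\<close>

definition nn_convolution :: "(real \<Rightarrow> real) \<Rightarrow> (real \<Rightarrow> real) \<Rightarrow> real \<Rightarrow> ennreal" where
  "nn_convolution F G w = (\<integral>\<^sup>+v. ennreal (F (w - v) * G v) \<partial>lborel)"

definition nn_correlation :: "(real \<Rightarrow> real) \<Rightarrow> (real \<Rightarrow> real) \<Rightarrow> real \<Rightarrow> ennreal" where
  "nn_correlation K F v = (\<integral>\<^sup>+u. ennreal (K (u + v) * F u) \<partial>lborel)"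

lemma borel_measurable_nn_convolution [measurable]:
  assumes [measurable]: "F \<in> borel_measurable borel" "G \<in> borel_measurable borel"
  shows "nn_convolution F G \<in> borel_measurable borel"
  unfolding nn_convolution_def by measurable

lemma borel_measurable_nn_correlation [measurable]:
  assumes [measurable]: "K \<in> borel_measurable borel" "F \<in> borel_measurable borel"
  shows "nn_correlation K F \<in> borel_measurable borel"
  unfolding nn_correlation_def by measurable

lemma nn_convolution_commute:
  assumes [measurable]: "F \<in> borel_measurable borel" "G \<in> borel_measurable borel"
  shows "nn_convolution F G = nn_convolution G F"
proof
  fix w
  show "nn_convolution F G w = nn_convolution G F w"
    using nn_integral_lborel_reflect[of "\<lambda>v. ennreal (F (w - v) * G v)" w]
    by (simp add: nn_convolution_def mult.commute)
qed

lemma nn_integral_mult_nn_correlation: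
  assumes [measurable]: "K \<in> borel_measurable borel" "F \<in> borel_measurable borel" "G \<in> borel_measurable borel"
    and K_nonneg: "\<And>x. K x \<ge> 0" and F_nonneg: "\<And>x. F x \<ge> 0" and G_nonneg: "\<And>x. G x \<ge> 0"
  shows "(\<integral>\<^sup>+v. ennreal (G v) * nn_correlation K F v \<partial>lborel)
       = (\<integral>\<^sup>+w. ennreal (K w) * nn_convolution F G w \<partial>lborel)"
proof -
  have "(\<integral>\<^sup>+v. ennreal (G v) * nn_correlation K F v \<partial>lborel)
      = (\<integral>\<^sup>+v. \<integral>\<^sup>+u. ennreal (G v * K (u + v) * F u) \<partial>lborel \<partial>lborel)"
    unfolding nn_correlation_def
    by (simp add: G_nonneg K_nonneg F_nonneg ennreal_mult' mult.assoc flip: nn_integral_cmult)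
  also have "\<dots> = (\<integral>\<^sup>+v. \<integral>\<^sup>+w. ennreal (G v * K w * F (w - v)) \<partial>lborel \<partial>lborel)"
  proof (rule nn_integral_cong)
    fix v
    show "(\<integral>\<^sup>+u. ennreal (G v * K (u + v) * F u) \<partial>lborel) = (\<integral>\<^sup>+w. ennreal (G v * K w * F (w - v)) \<partial>lborel)"
      using nn_integral_lborel_shift[of "\<lambda>w. ennreal (G v * K w * F (w - v))" v] by simp
  qed
  also have "\<dots> = (\<integral>\<^sup>+w. \<integral>\<^sup>+v. ennreal (G v * K w * F (w - v)) \<partial>lborel \<partial>lborel)"
    by (rule lborel_pair.Fubini') measurable
  also have "\<dots> = (\<integral>\<^sup>+w. ennreal (K w) * nn_convolution F G w \<partial>lborel)"
    unfolding nn_convolution_def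
    by (simp add: G_nonneg K_nonneg F_nonneg ennreal_mult' mult_ac flip: nn_integral_cmult)
  finally show ?thesis .
qed

lemma nn_convolution_le:
  assumes pq: "p > 1" "1/p + 1/q = 1"
    and [measurable]: "F \<in> borel_measurable borel" "G \<in> borel_measurable borel"
    and F_nonneg: "\<And>x. F x \<ge> 0" and G_nonneg: "\<And>x. G x \<ge> 0"
    and F: "(\<integral>\<^sup>+u. ennreal (F u powr p) \<partial>lborel) = ennreal A" "A \<ge> 0"
    and G: "(\<integral>\<^sup>+v. ennreal (G v powr q) \<partial>lborel) = ennreal B" "B \<ge> 0"
  shows "nn_convolution F G w \<le> ennreal (A powr (1/p) * B powr (1/q))"
  unfolding nn_convolution_def
  using nn_integral_lborel_reflect[of "\<lambda>u. ennreal (F u powr p)" w] F G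
  by (intro nn_integral_Holder[OF pq]) (auto simp: F_nonneg G_nonneg)

lemma nn_convolution_eq_imp_AE:
  assumes pq: "p > 1" "1/p + 1/q = 1"
    and [measurable]: "F \<in> borel_measurable borel" "G \<in> borel_measurable borel"
    and F_nonneg: "\<And>x. F x \<ge> 0" and G_nonneg: "\<And>x. G x \<ge> 0"
    and F: "(\<integral>\<^sup>+u. ennreal (F u powr p) \<partial>lborel) = ennreal A" "A > 0"
    and G: "(\<integral>\<^sup>+v. ennreal (G v powr q) \<partial>lborel) = ennreal B" "B > 0"
    and eq: "nn_convolution F G w = ennreal (A powr (1/p) * B powr (1/q))"
  shows "AE v in lborel. F (w - v) powr p / A = G v powr q / B"
  using nn_integral_lborel_reflect[of "\<lambda>u. ennreal (F u powr p)" w] F G eq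
  by (intro nn_integral_Holder_eq_imp_AE[OF pq]) (auto simp: F_nonneg G_nonneg nn_convolution_def)

lemma nn_integral_kernel_convolution_le:
  assumes pq: "p > 1" "1/p + 1/q = 1"
    and [measurable]: "K \<in> borel_measurable borel" "F \<in> borel_measurable borel" "G \<in> borel_measurable borel"
    and F_nonneg: "\<And>x. F x \<ge> 0" and G_nonneg: "\<And>x. G x \<ge> 0"
    and K: "(\<integral>\<^sup>+w. ennreal (K w) \<partial>lborel) = ennreal k" "k \<ge> 0"
    and F: "(\<integral>\<^sup>+u. ennreal (F u powr p) \<partial>lborel) = ennreal A" "A \<ge> 0"
    and G: "(\<integral>\<^sup>+v. ennreal (G v powr q) \<partial>lborel) = ennreal B" "B \<ge> 0"
  shows "(\<integral>\<^sup>+w. ennreal (K w) * nn_convolution F G w \<partial>lborel) \<le> ennreal (k * (A powr (1/p) * B powr (1/q)))"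
proof -
  have "(\<integral>\<^sup>+w. ennreal (K w) * nn_convolution F G w \<partial>lborel)
      \<le> (\<integral>\<^sup>+w. ennreal (K w) * ennreal (A powr (1/p) * B powr (1/q)) \<partial>lborel)"
    using F G by (intro nn_integral_mono mult_left_mono nn_convolution_le[OF pq]) (auto simp: F_nonneg G_nonneg)
  also have "\<dots> = ennreal (k * (A powr (1/p) * B powr (1/q)))"
    using K by (simp add: nn_integral_multc ennreal_mult)
  finally show ?thesis .
qed

lemma nn_integral_kernel_convolution_eq_imp_AE:
  assumes pq: "p > 1" "1/p + 1/q = 1"
    and [measurable]: "K \<in> borel_measurable borel" "F \<in> borel_measurable borel" "G \<in> borel_measurable borel"
    and F_nonneg: "\<And>x. F x \<ge> 0" and G_nonneg: "\<And>x. G x \<ge> 0"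
    and K: "(\<integral>\<^sup>+w. ennreal (K w) \<partial>lborel) = ennreal k" "k \<ge> 0"
    and F: "(\<integral>\<^sup>+u. ennreal (F u powr p) \<partial>lborel) = ennreal A" "A > 0"
    and G: "(\<integral>\<^sup>+v. ennreal (G v powr q) \<partial>lborel) = ennreal B" "B > 0"
    and eq: "(\<integral>\<^sup>+w. ennreal (K w) * nn_convolution F G w \<partial>lborel) = ennreal (k * (A powr (1/p) * B powr (1/q)))"
  shows "AE w in lborel. K w > 0 \<longrightarrow> (AE v in lborel. F (w - v) powr p / A = G v powr q / B)"
proof -
  define c where "c = A powr (1/p) * B powr (1/q)"
  have "(\<integral>\<^sup>+w. ennreal (K w) * ennreal c \<partial>lborel) = ennreal (k * c)"
    using K F G by (simp add: nn_integral_multc ennreal_mult c_def)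
  then have "AE w in lborel. ennreal (K w) * nn_convolution F G w = ennreal (K w) * ennreal c"
    using F G eq unfolding c_def
    by (intro nn_integral_eq_imp_AE_eq AE_I2 mult_left_mono nn_convolution_le[OF pq])
      (auto simp: F_nonneg G_nonneg)
  then show ?thesis
  proof (rule eventually_mono, intro impI)
    fix w assume "ennreal (K w) * nn_convolution F G w = ennreal (K w) * ennreal c" "K w > 0"
    then have "nn_convolution F G w = ennreal c" by (simp add: ennreal_mult_cancel_left)
    then show "AE v in lborel. F (w - v) powr p / A = G v powr q / B"
      unfolding c_def by (rule nn_convolution_eq_imp_AE[OF pq assms(4,5) F_nonneg G_nonneg F G])
  qed
qed

lemma nn_integral_kernel_convolution_less:
  assumes pq: "p > 1" "1/p + 1/q = 1"
    and [measurable]: "K \<in> borel_measurable borel" "F \<in> borel_measurable borel" "G \<in> borel_measurable borel"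
    and K_nonneg: "\<And>x. K x \<ge> 0" and F_nonneg: "\<And>x. F x \<ge> 0" and G_nonneg: "\<And>x. G x \<ge> 0"
    and K: "(\<integral>\<^sup>+w. ennreal (K w) \<partial>lborel) = ennreal k" "k > 0"
    and F: "(\<integral>\<^sup>+u. ennreal (F u powr p) \<partial>lborel) = ennreal A" "A > 0"
    and G: "(\<integral>\<^sup>+v. ennreal (G v powr q) \<partial>lborel) = ennreal B" "B > 0"
  shows "(\<integral>\<^sup>+w. ennreal (K w) * nn_convolution F G w \<partial>lborel) < ennreal (k * A powr (1/p) * B powr (1/q))"
proof (rule ccontr)
  assume "\<not> ?thesis"
  with nn_integral_kernel_convolution_le[OF pq assms(3-5) F_nonneg G_nonneg K(1) _ F(1) _ G(1)] K F G
  have "(\<integral>\<^sup>+w. ennreal (K w) * nn_convolution F G w \<partial>lborel) = ennreal (k * (A powr (1/p) * B powr (1/q)))"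
    by (simp add: mult.assoc)
  from nn_integral_kernel_convolution_eq_imp_AE[OF pq assms(3-5) F_nonneg G_nonneg K(1) _ F G this] K
  have equality_AE: "AE w in lborel. K w > 0 \<longrightarrow> (AE v in lborel. F (w - v) powr p / A = G v powr q / B)"
    by simp
  have equality_not_null: "\<not> (AE w in lborel. \<not> (AE v in lborel. F (w - v) powr p / A = G v powr q / B))"
  proof
    assume "AE w in lborel. \<not> (AE v in lborel. F (w - v) powr p / A = G v powr q / B)"
    with equality_AE have "AE w in lborel. ennreal (K w) = 0"
      by eventually_elim (auto simp: ennreal_eq_0_iff)
    then have "(\<integral>\<^sup>+w. ennreal (K w) \<partial>lborel) = 0" by (subst nn_integral_0_iff_AE) auto
    then show False using K by simp
  qed
  \<comment> \<open>Comparing two such points \<open>w\<close> makes \<open>F^p\<close> periodic; being integrable, it vanishes.\<close>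
  obtain w1 w2 where "w1 < w2"
    and AE_w1: "AE v in lborel. F (w1 - v) powr p / A = G v powr q / B"
    and AE_w2: "AE v in lborel. F (w2 - v) powr p / A = G v powr q / B"
    using not_AE_lborel_imp_two_points[OF equality_not_null] by blast
  from AE_w1 AE_w2 have "AE v in lborel. F (w1 - v) powr p = F (w2 - v) powr p"
    by eventually_elim (use F(2) in \<open>simp add: field_simps\<close>)
  then have "AE z in lborel. (\<lambda>v. F (w1 - v) powr p = F (w2 - v) powr p) (w1 + (-1) * z)"
    by (intro AE_borel_affine) (simp_all, measurable)
  then have "AE z in lborel. ennreal (F (z + (w2 - w1)) powr p) = ennreal (F z powr p)"
    by eventually_elim (simp add: algebra_simps)
  then have "(\<integral>\<^sup>+u. ennreal (F u powr p) \<partial>lborel) = 0"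
    using \<open>w1 < w2\<close> F by (intro nn_integral_periodic_eq_0) auto
  then show False using F by simp
qed

lemma nn_integral_nn_correlation_powr_le:
  assumes p: "p > 1"
    and [measurable]: "K \<in> borel_measurable borel" "F \<in> borel_measurable borel"
    and K_nonneg: "\<And>x. K x \<ge> 0" and F_nonneg: "\<And>x. F x \<ge> 0"
    and K: "(\<integral>\<^sup>+w. ennreal (K w) \<partial>lborel) = ennreal k" "k > 0"
    and F: "(\<integral>\<^sup>+u. ennreal (F u powr p) \<partial>lborel) = ennreal A" "A \<ge> 0"
  shows "(\<integral>\<^sup>+v. epowr (nn_correlation K F v) p \<partial>lborel) \<le> ennreal (k powr p * A)"
proof -
  have K_shift: "(\<integral>\<^sup>+v. ennreal (K (u + v)) \<partial>lborel) = ennreal k" for u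
    using nn_integral_lborel_shift[of "\<lambda>v. ennreal (K v)" u] K by (simp add: add.commute)
  have "(\<integral>\<^sup>+v. epowr (nn_correlation K F v) p \<partial>lborel)
      \<le> (\<integral>\<^sup>+v. ennreal (k powr (p - 1)) * (\<integral>\<^sup>+u. ennreal (K (u + v) * F u powr p) \<partial>lborel) \<partial>lborel)"
    unfolding nn_correlation_def
  proof (rule nn_integral_mono)
    fix v
    show "epowr (\<integral>\<^sup>+u. ennreal (K (u + v) * F u) \<partial>lborel) p
        \<le> ennreal (k powr (p - 1)) * (\<integral>\<^sup>+u. ennreal (K (u + v) * F u powr p) \<partial>lborel)"
      using K_shift[of 0] nn_integral_lborel_shift[of "\<lambda>u. ennreal (K u)" v] K
      by (intro nn_integral_weighted_powr_le[OF p]) (auto simp: K_nonneg F_nonneg)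
  qed
  also have "\<dots> = ennreal (k powr (p - 1)) * (\<integral>\<^sup>+u. \<integral>\<^sup>+v. ennreal (K (u + v)) * ennreal (F u powr p) \<partial>lborel \<partial>lborel)"
    by (simp add: nn_integral_cmult lborel_pair.Fubini'[of "\<lambda>u v. ennreal (K (u + v)) * ennreal (F u powr p)"]
        K_nonneg ennreal_mult' del: ennreal_mult)
  also have "\<dots> = ennreal (k powr (p - 1)) * (ennreal k * ennreal A)"
    by (simp add: nn_integral_multc nn_integral_cmult K_shift F mult_ac)
  also have "\<dots> = ennreal (k powr p * A)"
    using K F by (simp add: powr_diff mult_ac flip: ennreal_mult)
  finally show ?thesis .
qed

lemma nn_integral_epowr_dual:
  fixes H :: "'a \<Rightarrow> ennreal"
  assumes pq: "p > 1" "1/p + 1/q = 1" and [measurable]: "H \<in> borel_measurable M"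
    and Q: "(\<integral>\<^sup>+x. epowr (H x) p \<partial>M) = ennreal Q"
  obtains G where "G \<in> borel_measurable M" "\<And>x. G x \<ge> 0"
    "(\<integral>\<^sup>+x. ennreal (G x powr q) \<partial>M) = ennreal Q"
    "(\<integral>\<^sup>+x. ennreal (G x) * H x \<partial>M) = ennreal Q"
proof
  have pq': "(p - 1) * q = p" using pq conjugate_exponent_gt_1[OF pq] by (simp add: field_simps)
  have [measurable]: "(\<lambda>x. epowr (H x) p) \<in> borel_measurable M"
    unfolding epowr_def by measurable
  have "AE x in M. epowr (H x) p \<noteq> \<infinity>"
    using Q by (intro nn_integral_PInf_AE) auto
  then have H_finite: "AE x in M. H x \<noteq> \<infinity>"
    by eventually_elim (auto simp: epowr_def)
  define G where "G x = enn2real (H x) powr (p - 1)" for x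
  show "G \<in> borel_measurable M" "\<And>x. G x \<ge> 0" unfolding G_def by auto
  show "(\<integral>\<^sup>+x. ennreal (G x powr q) \<partial>M) = ennreal Q"
    unfolding Q[symmetric] using H_finite
    by (intro nn_integral_cong_AE) (auto elim!: eventually_mono simp: G_def epowr_def powr_powr pq')
  show "(\<integral>\<^sup>+x. ennreal (G x) * H x \<partial>M) = ennreal Q"
    unfolding Q[symmetric] using H_finite
  proof (intro nn_integral_cong_AE, eventually_elim)
    fix x assume "H x \<noteq> \<infinity>"
    then obtain h where h: "H x = ennreal h" "h \<ge> 0" by (cases "H x") auto
    have "h powr (p - 1) * h = h powr p"
      using h by (cases "h = 0") (simp_all add: powr_mult_base mult.commute)
    then show "ennreal (G x) * H x = epowr (H x) p"
      using h by (simp add: G_def epowr_def flip: ennreal_mult)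
  qed
qed

lemma nn_integral_nn_correlation_powr_less:
  assumes p: "p > 1"
    and [measurable]: "K \<in> borel_measurable borel" "F \<in> borel_measurable borel"
    and K_nonneg: "\<And>x. K x \<ge> 0" and F_nonneg: "\<And>x. F x \<ge> 0"
    and K: "(\<integral>\<^sup>+w. ennreal (K w) \<partial>lborel) = ennreal k" "k > 0"
    and F: "(\<integral>\<^sup>+u. ennreal (F u powr p) \<partial>lborel) = ennreal A" "A > 0"
  shows "(\<integral>\<^sup>+v. epowr (nn_correlation K F v) p \<partial>lborel) < ennreal (k powr p * A)"
proof -
  define q where "q = p / (p - 1)"
  have pq: "1/p + 1/q = 1" using p by (auto simp: q_def field_simps)
  define Q where "Q = (\<integral>\<^sup>+v. epowr (nn_correlation K F v) p \<partial>lborel)"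
  have Q_le: "Q \<le> ennreal (k powr p * A)"
    unfolding Q_def using F by (intro nn_integral_nn_correlation_powr_le[OF p _ _ K_nonneg F_nonneg K]) auto
  have "(\<integral>\<^sup>+v. epowr (nn_correlation K F v) p \<partial>lborel) = Q" by (simp add: Q_def)
  then show ?thesis
  proof (cases "Q = 0")
    case True
    then show ?thesis using \<open>_ = Q\<close> K F by simp
  next
    case False
    with Q_le obtain Qr where Qr: "Q = ennreal Qr" "Qr > 0"
      by (cases Q) (auto simp: top_unique ennreal_eq_0_iff)
    \<comment> \<open>Test the bilinear inequality against \<open>G = H^(p - 1)\<close>, \<open>H\<close> the correlation.\<close>
    then obtain G where G_meas: "G \<in> borel_measurable borel" and G_nonneg: "\<And>x. G x \<ge> 0"
      and G: "(\<integral>\<^sup>+v. ennreal (G v powr q) \<partial>lborel) = ennreal Qr"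
      and GH: "(\<integral>\<^sup>+v. ennreal (G v) * nn_correlation K F v \<partial>lborel) = ennreal Qr"
      using nn_integral_epowr_dual[OF p pq, of "nn_correlation K F" lborel Qr] by (auto simp: Q_def)
    have "ennreal Qr = (\<integral>\<^sup>+w. ennreal (K w) * nn_convolution F G w \<partial>lborel)"
      unfolding GH[symmetric] by (rule nn_integral_mult_nn_correlation[OF assms(2,3) G_meas K_nonneg F_nonneg G_nonneg])
    also have "\<dots> < ennreal (k * A powr (1/p) * Qr powr (1/q))"
      by (rule nn_integral_kernel_convolution_less[OF p pq assms(2,3) G_meas K_nonneg F_nonneg G_nonneg K F G Qr(2)])
    finally have "Qr powr (1/p) * Qr powr (1/q) < (k * A powr (1/p)) * Qr powr (1/q)"
      using Qr K F by (simp add: ennreal_less_iff pq flip: powr_add)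
    then have "Qr powr (1/p) < k * A powr (1/p)"
      using Qr by simp
    then have "(Qr powr (1/p)) powr p < (k * A powr (1/p)) powr p"
      using p Qr by (intro powr_less_mono2) auto
    then show ?thesis
      using \<open>_ = Q\<close> p Qr K F by (simp add: powr_powr powr_mult ennreal_less_iff)
  qed
qed

section \<open>Logarithmic substitution\<close>

definition zero_ext :: "(real \<Rightarrow> real) \<Rightarrow> real \<Rightarrow> real" where
  "zero_ext f x = indicator {0<..} x *\<^sub>R f x"

lemma zero_ext_pos [simp]: "x > 0 \<Longrightarrow> zero_ext f x = f x"
  by (simp add: zero_ext_def)

lemma borel_measurable_zero_ext:
  "set_borel_measurable lborel {0<..} f \<Longrightarrow> zero_ext f \<in> borel_measurable borel"
  unfolding set_borel_measurable_def zero_ext_def[abs_def] by simp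

definition log_kernel :: "(real \<Rightarrow> real) \<Rightarrow> real \<Rightarrow> real \<Rightarrow> real" where
  "log_kernel h \<sigma> w = (if w < 0 then h (exp w) * exp (\<sigma> * w) else 0)"

definition log_transform :: "real \<Rightarrow> (real \<Rightarrow> real) \<Rightarrow> real \<Rightarrow> real" where
  "log_transform \<sigma> f u = f (exp u) * exp ((1 - \<sigma>) * u)"

lemma borel_measurable_log_kernel:
  assumes "set_borel_measurable lborel {0<..} h"
  shows "log_kernel h \<sigma> \<in> borel_measurable borel"
proof -
  note [measurable] = borel_measurable_zero_ext[OF assms]
  have "log_kernel h \<sigma> = (\<lambda>w. if w < 0 then zero_ext h (exp w) * exp (\<sigma> * w) else 0)"
    by (simp add: log_kernel_def fun_eq_iff)
  also have "\<dots> \<in> borel_measurable borel" by measurable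
  finally show ?thesis .
qed

lemma borel_measurable_log_transform:
  assumes "set_borel_measurable lborel {0<..} f"
  shows "log_transform \<sigma> f \<in> borel_measurable borel"
proof -
  note [measurable] = borel_measurable_zero_ext[OF assms]
  have "log_transform \<sigma> f = (\<lambda>u. zero_ext f (exp u) * exp ((1 - \<sigma>) * u))"
    by (simp add: log_transform_def fun_eq_iff)
  also have "\<dots> \<in> borel_measurable borel" by measurable
  finally show ?thesis .
qed

lemma log_kernel_nonneg: "\<forall>t>0. 0 \<le> h t \<Longrightarrow> log_kernel h \<sigma> w \<ge> 0"
  by (simp add: log_kernel_def)

lemma log_transform_nonneg: "\<forall>t>0. 0 \<le> f t \<Longrightarrow> log_transform \<sigma> f u \<ge> 0"
  by (simp add: log_transform_def)

lemma k1_eq_log: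
  assumes "set_borel_measurable lborel {0<..} h" and h_nonneg: "\<forall>t>0. 0 \<le> h t"
  shows "k1 h \<sigma> = (\<integral>\<^sup>+w. ennreal (log_kernel h \<sigma> w) \<partial>lborel)"
proof -
  note [measurable] = borel_measurable_zero_ext[OF assms(1)]
  have "k1 h \<sigma> = (\<integral>\<^sup>+t\<in>{0<..}. (if t < 1 then ennreal (zero_ext h t * t powr (\<sigma> - 1)) else 0) \<partial>lborel)"
    unfolding k1_def by (intro nn_integral_cong) (auto simp: indicator_def)
  also have "\<dots> = (\<integral>\<^sup>+w. (if exp w < 1 then ennreal (zero_ext h (exp w) * exp w powr (\<sigma> - 1)) else 0) * ennreal (exp w) \<partial>lborel)"
    by (rule nn_integral_exp_substitution) measurable
  also have "\<dots> = (\<integral>\<^sup>+w. ennreal (log_kernel h \<sigma> w) \<partial>lborel)"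
    using h_nonneg
    by (intro nn_integral_cong) (auto simp: log_kernel_def exp_powr_real algebra_simps simp flip: ennreal_mult exp_add)
  finally show ?thesis .
qed

lemma wint_eq_log:
  assumes "set_borel_measurable lborel {0<..} f" and f_nonneg: "\<forall>t>0. 0 \<le> f t"
  shows "wint e \<sigma> f = (\<integral>\<^sup>+u. ennreal (log_transform \<sigma> f u powr e) \<partial>lborel)"
proof -
  note [measurable] = borel_measurable_zero_ext[OF assms(1)]
  have "wint e \<sigma> f = (\<integral>\<^sup>+x\<in>{0<..}. ennreal (x powr (e * (1 - \<sigma>) - 1) * zero_ext f x powr e) \<partial>lborel)"
    unfolding wint_def by (intro nn_integral_cong) (auto simp: indicator_def)
  also have "\<dots> = (\<integral>\<^sup>+u. ennreal (exp u powr (e * (1 - \<sigma>) - 1) * f (exp u) powr e) * ennreal (exp u) \<partial>lborel)"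
    by (subst nn_integral_exp_substitution) simp_all
  also have "\<dots> = (\<integral>\<^sup>+u. ennreal (log_transform \<sigma> f u powr e) \<partial>lborel)"
  proof (intro nn_integral_cong)
    fix u :: real
    have "exp u powr (e * (1 - \<sigma>) - 1) * f (exp u) powr e * exp u = (f (exp u) * exp ((1 - \<sigma>) * u)) powr e"
      using f_nonneg by (simp add: powr_mult exp_powr_real algebra_simps flip: exp_add)
    then show "ennreal (exp u powr (e * (1 - \<sigma>) - 1) * f (exp u) powr e) * ennreal (exp u)
        = ennreal (log_transform \<sigma> f u powr e)"
      by (simp add: log_transform_def flip: ennreal_mult)
  qed
  finally show ?thesis .
qed

lemma inner_int_eq_zero_ext:
  "inner_int h f y = (\<integral>\<^sup>+x\<in>{0<..}. (if x * y < 1 then ennreal (zero_ext h (x * y) * zero_ext f x) else 0) \<partial>lborel)"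
proof (cases "y > 0")
  case True
  then show ?thesis
    unfolding inner_int_def by (intro nn_integral_cong) (auto simp: indicator_def field_simps)
next
  case False
  then have "zero_ext h (x * y) = 0" if "x > 0" for x
    using that by (simp add: zero_ext_def zero_less_mult_iff)
  moreover have "{0<..<1/y} = {}" using False by auto
  ultimately show ?thesis
    unfolding inner_int_def by (intro nn_integral_cong) (auto simp: indicator_def)
qed

lemma borel_measurable_inner_int:
  assumes "set_borel_measurable lborel {0<..} h" "set_borel_measurable lborel {0<..} f"
  shows "inner_int h f \<in> borel_measurable borel"
proof -
  note [measurable] = borel_measurable_zero_ext[OF assms(1)] borel_measurable_zero_ext[OF assms(2)]
  show ?thesis unfolding inner_int_eq_zero_ext[abs_def] by measurable
qed

lemma inner_int_exp:
  assumes "set_borel_measurable lborel {0<..} h" "set_borel_measurable lborel {0<..} f"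
    and h_nonneg: "\<forall>t>0. 0 \<le> h t" and f_nonneg: "\<forall>t>0. 0 \<le> f t"
  shows "inner_int h f (exp v)
    = ennreal (exp (- \<sigma> * v)) * nn_correlation (log_kernel h \<sigma>) (log_transform \<sigma> f) v"
proof -
  note [measurable] = borel_measurable_zero_ext[OF assms(1)] borel_measurable_zero_ext[OF assms(2)]
    borel_measurable_log_kernel[OF assms(1)] borel_measurable_log_transform[OF assms(2)]
  have "inner_int h f (exp v) = (\<integral>\<^sup>+u.
      (if exp u * exp v < 1 then ennreal (zero_ext h (exp u * exp v) * zero_ext f (exp u)) else 0) * ennreal (exp u) \<partial>lborel)"
    unfolding inner_int_eq_zero_ext by (rule nn_integral_exp_substitution) measurable
  also have "\<dots> = (\<integral>\<^sup>+u. ennreal (exp (- \<sigma> * v)) * ennreal (log_kernel h \<sigma> (u + v) * log_transform \<sigma> f u) \<partial>lborel)"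
  proof (rule nn_integral_cong)
    fix u
    have "exp (- \<sigma> * v) * (exp (\<sigma> * (u + v)) * exp ((1 - \<sigma>) * u)) = exp u"
      by (simp add: algebra_simps flip: exp_add)
    then show "(if exp u * exp v < 1 then ennreal (zero_ext h (exp u * exp v) * zero_ext f (exp u)) else 0) * ennreal (exp u)
        = ennreal (exp (- \<sigma> * v)) * ennreal (log_kernel h \<sigma> (u + v) * log_transform \<sigma> f u)"
      using h_nonneg f_nonneg
      by (auto simp: log_kernel_def log_transform_def exp_add mult_ac simp flip: ennreal_mult exp_add)
  qed
  also have "\<dots> = ennreal (exp (- \<sigma> * v)) * nn_correlation (log_kernel h \<sigma>) (log_transform \<sigma> f) v"
    unfolding nn_correlation_def by (rule nn_integral_cmult) measurable
  finally show ?thesis .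
qed

lemma epowr_ennreal_mult:
  assumes "c > 0"
  shows "epowr (ennreal c * x) r = ennreal (c powr r) * epowr x r"
proof (cases x)
  case (real s)
  then show ?thesis using assms
    by (simp add: epowr_def powr_mult flip: ennreal_mult)
qed (use assms in \<open>simp add: epowr_def ennreal_mult_top\<close>)

lemma bilinear_eq_log:
  assumes hm: "set_borel_measurable lborel {0<..} h" and fm: "set_borel_measurable lborel {0<..} f"
    and gm: "set_borel_measurable lborel {0<..} g"
    and h_nonneg: "\<forall>t>0. 0 \<le> h t" and f_nonneg: "\<forall>t>0. 0 \<le> f t" and g_nonneg: "\<forall>t>0. 0 \<le> g t"
  shows "(\<integral>\<^sup>+y\<in>{0<..}. inner_int h f y * ennreal (g y) \<partial>lborel)
    = (\<integral>\<^sup>+v. ennreal (log_transform \<sigma> g v) * nn_correlation (log_kernel h \<sigma>) (log_transform \<sigma> f) v \<partial>lborel)"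
proof -
  note [measurable] = borel_measurable_zero_ext[OF gm] borel_measurable_inner_int[OF hm fm]
  have "(\<integral>\<^sup>+y\<in>{0<..}. inner_int h f y * ennreal (g y) \<partial>lborel)
      = (\<integral>\<^sup>+y\<in>{0<..}. inner_int h f y * ennreal (zero_ext g y) \<partial>lborel)"
    by (intro nn_integral_cong) (simp add: indicator_def)
  also have "\<dots> = (\<integral>\<^sup>+v. inner_int h f (exp v) * ennreal (g (exp v)) * ennreal (exp v) \<partial>lborel)"
    by (subst nn_integral_exp_substitution) simp_all
  also have "\<dots> = (\<integral>\<^sup>+v. ennreal (log_transform \<sigma> g v) * nn_correlation (log_kernel h \<sigma>) (log_transform \<sigma> f) v \<partial>lborel)"
  proof (rule nn_integral_cong)
    fix v
    have "exp (- \<sigma> * v) * g (exp v) * exp v = log_transform \<sigma> g v"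
      by (simp add: log_transform_def algebra_simps flip: exp_add)
    then show "inner_int h f (exp v) * ennreal (g (exp v)) * ennreal (exp v)
        = ennreal (log_transform \<sigma> g v) * nn_correlation (log_kernel h \<sigma>) (log_transform \<sigma> f) v"
      using g_nonneg
      by (auto simp: inner_int_exp[where \<sigma>=\<sigma>, OF hm fm h_nonneg f_nonneg] ennreal_mult mult_ac simp flip: \<open>_ = log_transform \<sigma> g v\<close>)
  qed
  finally show ?thesis .
qed

lemma hardy_power_eq_log:
  assumes hm: "set_borel_measurable lborel {0<..} h" and fm: "set_borel_measurable lborel {0<..} f"
    and h_nonneg: "\<forall>t>0. 0 \<le> h t" and f_nonneg: "\<forall>t>0. 0 \<le> f t"
  shows "(\<integral>\<^sup>+y\<in>{0<..}. ennreal (y powr (p * \<sigma> - 1)) * epowr (inner_int h f y) p \<partial>lborel)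
    = (\<integral>\<^sup>+v. epowr (nn_correlation (log_kernel h \<sigma>) (log_transform \<sigma> f) v) p \<partial>lborel)"
proof -
  note [measurable] = borel_measurable_inner_int[OF hm fm]
  have [measurable]: "(\<lambda>y. epowr (inner_int h f y) p) \<in> borel_measurable borel"
    unfolding epowr_def by measurable
  have "(\<integral>\<^sup>+y\<in>{0<..}. ennreal (y powr (p * \<sigma> - 1)) * epowr (inner_int h f y) p \<partial>lborel)
      = (\<integral>\<^sup>+v. ennreal (exp v powr (p * \<sigma> - 1)) * epowr (inner_int h f (exp v)) p * ennreal (exp v) \<partial>lborel)"
    by (rule nn_integral_exp_substitution) measurable
  also have "\<dots> = (\<integral>\<^sup>+v. epowr (nn_correlation (log_kernel h \<sigma>) (log_transform \<sigma> f) v) p \<partial>lborel)"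
  proof (rule nn_integral_cong)
    fix v
    have "ennreal (exp v powr (p * \<sigma> - 1)) * epowr (inner_int h f (exp v)) p * ennreal (exp v)
        = ennreal (exp v powr (p * \<sigma> - 1) * exp (- \<sigma> * v) powr p * exp v)
          * epowr (nn_correlation (log_kernel h \<sigma>) (log_transform \<sigma> f) v) p"
      by (simp add: inner_int_exp[where \<sigma>=\<sigma>, OF hm fm h_nonneg f_nonneg] epowr_ennreal_mult ennreal_mult mult_ac)
    also have "exp v powr (p * \<sigma> - 1) * exp (- \<sigma> * v) powr p * exp v = 1"
      by (simp add: exp_powr_real algebra_simps flip: exp_add)
    finally show "ennreal (exp v powr (p * \<sigma> - 1)) * epowr (inner_int h f (exp v)) p * ennreal (exp v)
        = epowr (nn_correlation (log_kernel h \<sigma>) (log_transform \<sigma> f) v) p"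
      by simp
  qed
  finally show ?thesis .
qed

section \<open>The two inequalities\<close>

lemma admissible_wint:
  assumes "admissible e \<sigma> f"
  shows "wint e \<sigma> f = ennreal (enn2real (wint e \<sigma> f))" "enn2real (wint e \<sigma> f) > 0"
  using assms by (auto simp: admissible_def ennreal_enn2real_if enn2real_positive_iff)

lemma bilinear_eq_kernel_convolution:
  assumes hm: "set_borel_measurable lborel {0<..} h" and fm: "set_borel_measurable lborel {0<..} f"
    and gm: "set_borel_measurable lborel {0<..} g"
    and h_nonneg: "\<forall>t>0. 0 \<le> h t" and f_nonneg: "\<forall>t>0. 0 \<le> f t" and g_nonneg: "\<forall>t>0. 0 \<le> g t"
  shows "(\<integral>\<^sup>+y\<in>{0<..}. inner_int h f y * ennreal (g y) \<partial>lborel)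
    = (\<integral>\<^sup>+w. ennreal (log_kernel h \<sigma> w) * nn_convolution (log_transform \<sigma> f) (log_transform \<sigma> g) w \<partial>lborel)"
  unfolding bilinear_eq_log[OF assms, where \<sigma>=\<sigma>]
  by (intro nn_integral_mult_nn_correlation borel_measurable_log_kernel[OF hm]
      borel_measurable_log_transform[OF fm] borel_measurable_log_transform[OF gm]
      log_kernel_nonneg[OF h_nonneg] log_transform_nonneg[OF f_nonneg] log_transform_nonneg[OF g_nonneg])

lemma hardy_bilinear_symmetric:
  assumes hm: "set_borel_measurable lborel {0<..} h" and fm: "set_borel_measurable lborel {0<..} f"
    and gm: "set_borel_measurable lborel {0<..} g"
    and h_nonneg: "\<forall>t>0. 0 \<le> h t" and f_nonneg: "\<forall>t>0. 0 \<le> f t" and g_nonneg: "\<forall>t>0. 0 \<le> g t"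
  shows "(\<integral>\<^sup>+y\<in>{0<..}. inner_int h f y * ennreal (g y) \<partial>lborel)
    = (\<integral>\<^sup>+x\<in>{0<..}. inner_int h g x * ennreal (f x) \<partial>lborel)"
  \<comment> \<open>The identity does not involve \<open>\<sigma>\<close>; any value gives a logarithmic picture.\<close>
  using nn_convolution_commute[OF borel_measurable_log_transform[OF fm] borel_measurable_log_transform[OF gm]]
  by (simp add: bilinear_eq_kernel_convolution[OF hm fm gm h_nonneg f_nonneg g_nonneg, where \<sigma>=0]
      bilinear_eq_kernel_convolution[OF hm gm fm h_nonneg g_nonneg f_nonneg, where \<sigma>=0])

lemma hardy_bilinear_less:
  assumes pq: "p > 1" "1/p + 1/q = 1"
    and hm: "set_borel_measurable lborel {0<..} h" and h_nonneg: "\<forall>t>0. 0 \<le> h t"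
    and k1: "0 < k1 h \<sigma>" "k1 h \<sigma> < \<infinity>"
    and f: "admissible p \<sigma> f" and g: "admissible q \<sigma> g"
  shows "(\<integral>\<^sup>+y\<in>{0<..}. inner_int h f y * ennreal (g y) \<partial>lborel)
    < ennreal (enn2real (k1 h \<sigma>) * enn2real (wint p \<sigma> f) powr (1/p) * enn2real (wint q \<sigma> g) powr (1/q))"
proof -
  have fm: "set_borel_measurable lborel {0<..} f" and f_nonneg: "\<forall>t>0. 0 \<le> f t"
    and gm: "set_borel_measurable lborel {0<..} g" and g_nonneg: "\<forall>t>0. 0 \<le> g t"
    using f g by (auto simp: admissible_def)
  show ?thesis
    unfolding bilinear_eq_kernel_convolution[OF hm fm gm h_nonneg f_nonneg g_nonneg, where \<sigma>=\<sigma>]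
  proof (rule nn_integral_kernel_convolution_less[OF pq])
    show "(\<integral>\<^sup>+w. ennreal (log_kernel h \<sigma> w) \<partial>lborel) = ennreal (enn2real (k1 h \<sigma>))"
      using k1 by (simp add: k1_eq_log[OF hm h_nonneg, symmetric] ennreal_enn2real_if)
    show "(\<integral>\<^sup>+u. ennreal (log_transform \<sigma> f u powr p) \<partial>lborel) = ennreal (enn2real (wint p \<sigma> f))"
      using admissible_wint[OF f] by (simp add: wint_eq_log[OF fm f_nonneg])
    show "(\<integral>\<^sup>+u. ennreal (log_transform \<sigma> g u powr q) \<partial>lborel) = ennreal (enn2real (wint q \<sigma> g))"
      using admissible_wint[OF g] by (simp add: wint_eq_log[OF gm g_nonneg])
  qed (use k1 admissible_wint[OF f] admissible_wint[OF g] in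
      \<open>auto simp: enn2real_positive_iff log_kernel_nonneg[OF h_nonneg] log_transform_nonneg[OF f_nonneg]
        log_transform_nonneg[OF g_nonneg] borel_measurable_log_kernel[OF hm]
        borel_measurable_log_transform[OF fm] borel_measurable_log_transform[OF gm]\<close>)
qed

lemma hardy_power_less:
  assumes p: "p > 1"
    and hm: "set_borel_measurable lborel {0<..} h" and h_nonneg: "\<forall>t>0. 0 \<le> h t"
    and k1: "0 < k1 h \<sigma>" "k1 h \<sigma> < \<infinity>"
    and f: "admissible p \<sigma> f"
  shows "(\<integral>\<^sup>+y\<in>{0<..}. ennreal (y powr (p * \<sigma> - 1)) * epowr (inner_int h f y) p \<partial>lborel)
    < ennreal (enn2real (k1 h \<sigma>) powr p * enn2real (wint p \<sigma> f))"
proof -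
  have fm: "set_borel_measurable lborel {0<..} f" and f_nonneg: "\<forall>t>0. 0 \<le> f t"
    using f by (auto simp: admissible_def)
  show ?thesis
    unfolding hardy_power_eq_log[OF hm fm h_nonneg f_nonneg]
  proof (rule nn_integral_nn_correlation_powr_less[OF p])
    show "(\<integral>\<^sup>+w. ennreal (log_kernel h \<sigma> w) \<partial>lborel) = ennreal (enn2real (k1 h \<sigma>))"
      using k1 by (simp add: k1_eq_log[OF hm h_nonneg, symmetric] ennreal_enn2real_if)
    show "(\<integral>\<^sup>+u. ennreal (log_transform \<sigma> f u powr p) \<partial>lborel) = ennreal (enn2real (wint p \<sigma> f))"
      using admissible_wint[OF f] by (simp add: wint_eq_log[OF fm f_nonneg])
  qed (use k1 admissible_wint[OF f] in
      \<open>auto simp: enn2real_positive_iff log_kernel_nonneg[OF h_nonneg] log_transform_nonneg[OF f_nonneg]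
        borel_measurable_log_kernel[OF hm] borel_measurable_log_transform[OF fm]\<close>)
qed

section \<open>Sharpness of the constants\<close>

lemma nn_integral_exp_neg_halfline:
  fixes a :: real assumes "a > 0"
  shows "(\<integral>\<^sup>+v\<in>{0..}. ennreal (exp (- a * v)) \<partial>lborel) = ennreal (1 / a)"
  using nn_integral_has_integral_lebesgue'[OF _ has_integral_exp_minus_to_infinity[OF assms, of 0]] by simp

definition sharp_f :: "real \<Rightarrow> real \<Rightarrow> real \<Rightarrow> real \<Rightarrow> real" where
  "sharp_f \<sigma> p \<epsilon> x = (if 0 < x \<and> x \<le> 1 then x powr (\<sigma> - 1 + \<epsilon> / p) else 0)"

definition sharp_g :: "real \<Rightarrow> real \<Rightarrow> real \<Rightarrow> real \<Rightarrow> real" where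
  "sharp_g \<sigma> q \<epsilon> y = (if 1 \<le> y then y powr (\<sigma> - 1 - \<epsilon> / q) else 0)"

lemma log_transform_sharp_f: "log_transform \<sigma> (sharp_f \<sigma> p \<epsilon>) u = (if u \<le> 0 then exp (\<epsilon> / p * u) else 0)"
  by (auto simp: log_transform_def sharp_f_def exp_powr_real algebra_simps simp flip: exp_add)

lemma log_transform_sharp_g: "log_transform \<sigma> (sharp_g \<sigma> q \<epsilon>) v = (if 0 \<le> v then exp (- (\<epsilon> / q) * v) else 0)"
  by (auto simp: log_transform_def sharp_g_def exp_powr_real algebra_simps simp flip: exp_add)

lemma sharp_f_measurable: "set_borel_measurable lborel {0<..} (sharp_f \<sigma> p \<epsilon>)"
  unfolding set_borel_measurable_def sharp_f_def by measurable

lemma sharp_g_measurable: "set_borel_measurable lborel {0<..} (sharp_g \<sigma> q \<epsilon>)"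
  unfolding set_borel_measurable_def sharp_g_def by measurable

lemma admissible_sharp_f:
  assumes "p > 0" "\<epsilon> > 0"
  shows "admissible p \<sigma> (sharp_f \<sigma> p \<epsilon>)" "wint p \<sigma> (sharp_f \<sigma> p \<epsilon>) = ennreal (1 / \<epsilon>)"
proof -
  note meas = sharp_f_measurable[of \<sigma> p \<epsilon>]
  have "wint p \<sigma> (sharp_f \<sigma> p \<epsilon>) = (\<integral>\<^sup>+u. ennreal (exp (- \<epsilon> * (0 - u))) * indicator {0..} (0 - u) \<partial>lborel)"
    using assms by (auto simp: wint_eq_log[OF meas] log_transform_sharp_f exp_powr_real indicator_def
        sharp_f_def intro!: nn_integral_cong)
  also have "\<dots> = (\<integral>\<^sup>+v\<in>{0..}. ennreal (exp (- \<epsilon> * v)) \<partial>lborel)"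
    by (rule nn_integral_lborel_reflect) measurable
  also have "\<dots> = ennreal (1 / \<epsilon>)"
    by (rule nn_integral_exp_neg_halfline[OF assms(2)])
  finally show "wint p \<sigma> (sharp_f \<sigma> p \<epsilon>) = ennreal (1 / \<epsilon>)" .
  then show "admissible p \<sigma> (sharp_f \<sigma> p \<epsilon>)"
    using meas assms by (simp add: admissible_def sharp_f_def)
qed

lemma admissible_sharp_g:
  assumes "q > 0" "\<epsilon> > 0"
  shows "admissible q \<sigma> (sharp_g \<sigma> q \<epsilon>)" "wint q \<sigma> (sharp_g \<sigma> q \<epsilon>) = ennreal (1 / \<epsilon>)"
proof -
  note meas = sharp_g_measurable[of \<sigma> q \<epsilon>]
  have "wint q \<sigma> (sharp_g \<sigma> q \<epsilon>) = (\<integral>\<^sup>+v\<in>{0..}. ennreal (exp (- \<epsilon> * v)) \<partial>lborel)"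
    using assms by (auto simp: wint_eq_log[OF meas] log_transform_sharp_g exp_powr_real indicator_def
        sharp_g_def intro!: nn_integral_cong)
  also have "\<dots> = ennreal (1 / \<epsilon>)"
    by (rule nn_integral_exp_neg_halfline[OF assms(2)])
  finally show "wint q \<sigma> (sharp_g \<sigma> q \<epsilon>) = ennreal (1 / \<epsilon>)" .
  then show "admissible q \<sigma> (sharp_g \<sigma> q \<epsilon>)"
    using meas assms by (simp add: admissible_def sharp_g_def)
qed

lemma log_kernel_mult_exp: "log_kernel h \<sigma> w * exp (\<delta> * w) = log_kernel h (\<sigma> + \<delta>) w"
  by (simp add: log_kernel_def distrib_right flip: exp_add)

lemma nn_correlation_sharp_f:
  assumes hm: "set_borel_measurable lborel {0<..} h" and h_nonneg: "\<forall>t>0. 0 \<le> h t" and "v \<ge> 0"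
  shows "nn_correlation (log_kernel h \<sigma>) (log_transform \<sigma> (sharp_f \<sigma> p \<epsilon>)) v
    = ennreal (exp (- (\<epsilon> / p) * v)) * k1 h (\<sigma> + \<epsilon> / p)"
proof -
  note [measurable] = borel_measurable_log_kernel[OF hm] borel_measurable_log_transform[OF sharp_f_measurable]
  have "(\<lambda>w. ennreal (log_kernel h \<sigma> w * log_transform \<sigma> (sharp_f \<sigma> p \<epsilon>) (w - v))) \<in> borel_measurable borel"
    by measurable
  from nn_integral_lborel_shift[OF this, of v]
  have "nn_correlation (log_kernel h \<sigma>) (log_transform \<sigma> (sharp_f \<sigma> p \<epsilon>)) v
      = (\<integral>\<^sup>+w. ennreal (log_kernel h \<sigma> w * log_transform \<sigma> (sharp_f \<sigma> p \<epsilon>) (w - v)) \<partial>lborel)"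
    by (simp add: nn_correlation_def)
  also have "\<dots> = (\<integral>\<^sup>+w. ennreal (exp (- (\<epsilon> / p) * v)) * ennreal (log_kernel h (\<sigma> + \<epsilon> / p) w) \<partial>lborel)"
  proof (rule nn_integral_cong)
    fix w
    have "log_kernel h \<sigma> w * log_transform \<sigma> (sharp_f \<sigma> p \<epsilon>) (w - v)
        = exp (- (\<epsilon> / p) * v) * (log_kernel h \<sigma> w * exp (\<epsilon> / p * w))"
      using \<open>v \<ge> 0\<close> by (auto simp: log_kernel_def log_transform_sharp_f algebra_simps diff_divide_distrib simp flip: exp_add)
    then show "ennreal (log_kernel h \<sigma> w * log_transform \<sigma> (sharp_f \<sigma> p \<epsilon>) (w - v))
        = ennreal (exp (- (\<epsilon> / p) * v)) * ennreal (log_kernel h (\<sigma> + \<epsilon> / p) w)"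
      unfolding log_kernel_mult_exp by (simp add: ennreal_mult log_kernel_nonneg[OF h_nonneg])
  qed
  also have "\<dots> = ennreal (exp (- (\<epsilon> / p) * v)) * k1 h (\<sigma> + \<epsilon> / p)"
    by (simp add: nn_integral_cmult borel_measurable_log_kernel[OF hm] k1_eq_log[OF hm h_nonneg])
  finally show ?thesis .
qed

lemma bilinear_sharp:
  assumes hm: "set_borel_measurable lborel {0<..} h" and h_nonneg: "\<forall>t>0. 0 \<le> h t"
    and pq: "1/p + 1/q = 1" and "\<epsilon> > 0"
  shows "(\<integral>\<^sup>+y\<in>{0<..}. inner_int h (sharp_f \<sigma> p \<epsilon>) y * ennreal (sharp_g \<sigma> q \<epsilon> y) \<partial>lborel)
    = ennreal (1 / \<epsilon>) * k1 h (\<sigma> + \<epsilon> / p)"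
proof -
  have "(\<integral>\<^sup>+y\<in>{0<..}. inner_int h (sharp_f \<sigma> p \<epsilon>) y * ennreal (sharp_g \<sigma> q \<epsilon> y) \<partial>lborel)
      = (\<integral>\<^sup>+v. ennreal (log_transform \<sigma> (sharp_g \<sigma> q \<epsilon>) v)
            * nn_correlation (log_kernel h \<sigma>) (log_transform \<sigma> (sharp_f \<sigma> p \<epsilon>)) v \<partial>lborel)"
    by (rule bilinear_eq_log[OF hm sharp_f_measurable sharp_g_measurable h_nonneg])
      (simp_all add: sharp_f_def sharp_g_def)
  also have "\<dots> = (\<integral>\<^sup>+v\<in>{0..}. ennreal (exp (- \<epsilon> * v)) * k1 h (\<sigma> + \<epsilon> / p) \<partial>lborel)"
  proof (rule nn_integral_cong)
    fix v :: real
    have "- (\<epsilon> / q) * v + - (\<epsilon> / p) * v = - \<epsilon> * v * (1/p + 1/q)"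
      by (simp add: algebra_simps)
    then have "exp (- (\<epsilon> / q) * v) * exp (- (\<epsilon> / p) * v) = exp (- \<epsilon> * v)"
      using pq by (simp flip: exp_add)
    then show "ennreal (log_transform \<sigma> (sharp_g \<sigma> q \<epsilon>) v)
          * nn_correlation (log_kernel h \<sigma>) (log_transform \<sigma> (sharp_f \<sigma> p \<epsilon>)) v
        = ennreal (exp (- \<epsilon> * v)) * k1 h (\<sigma> + \<epsilon> / p) * indicator {0..} v"
      by (simp add: log_transform_sharp_g nn_correlation_sharp_f[OF hm h_nonneg] flip: ennreal_mult mult.assoc)
  qed
  also have "\<dots> = (\<integral>\<^sup>+v\<in>{0..}. ennreal (exp (- \<epsilon> * v)) \<partial>lborel) * k1 h (\<sigma> + \<epsilon> / p)"
    by (subst nn_integral_multc[symmetric]) (auto intro!: nn_integral_cong simp: mult_ac)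
  also have "\<dots> = ennreal (1 / \<epsilon>) * k1 h (\<sigma> + \<epsilon> / p)"
    by (simp only: nn_integral_exp_neg_halfline[OF \<open>\<epsilon> > 0\<close>])
  finally show ?thesis .
qed

lemma hardy_power_sharp_ge:
  assumes hm: "set_borel_measurable lborel {0<..} h" and h_nonneg: "\<forall>t>0. 0 \<le> h t"
    and "p > 0" "\<epsilon> > 0"
  shows "ennreal (1 / \<epsilon>) * epowr (k1 h (\<sigma> + \<epsilon> / p)) p
    \<le> (\<integral>\<^sup>+y\<in>{0<..}. ennreal (y powr (p * \<sigma> - 1)) * epowr (inner_int h (sharp_f \<sigma> p \<epsilon>) y) p \<partial>lborel)"
proof -
  have "ennreal (1 / \<epsilon>) * epowr (k1 h (\<sigma> + \<epsilon> / p)) p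
      = (\<integral>\<^sup>+v\<in>{0..}. ennreal (exp (- \<epsilon> * v)) \<partial>lborel) * epowr (k1 h (\<sigma> + \<epsilon> / p)) p"
    by (simp only: nn_integral_exp_neg_halfline[OF \<open>\<epsilon> > 0\<close>])
  also have "\<dots> = (\<integral>\<^sup>+v\<in>{0..}. ennreal (exp (- \<epsilon> * v)) * epowr (k1 h (\<sigma> + \<epsilon> / p)) p \<partial>lborel)"
    by (subst nn_integral_multc[symmetric]) (auto intro!: nn_integral_cong simp: mult_ac)
  also have "\<dots> \<le> (\<integral>\<^sup>+v. epowr (nn_correlation (log_kernel h \<sigma>) (log_transform \<sigma> (sharp_f \<sigma> p \<epsilon>)) v) p \<partial>lborel)"
  proof (rule nn_integral_mono)
    fix v :: real
    have "exp (- (\<epsilon> / p) * v) powr p = exp (- \<epsilon> * v)"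
      using \<open>p > 0\<close> by (simp add: exp_powr_real)
    then show "ennreal (exp (- \<epsilon> * v)) * epowr (k1 h (\<sigma> + \<epsilon> / p)) p * indicator {0..} v
        \<le> epowr (nn_correlation (log_kernel h \<sigma>) (log_transform \<sigma> (sharp_f \<sigma> p \<epsilon>)) v) p"
      by (cases "v \<ge> 0") (simp_all add: nn_correlation_sharp_f[OF hm h_nonneg] epowr_ennreal_mult)
  qed
  also have "\<dots> = (\<integral>\<^sup>+y\<in>{0<..}. ennreal (y powr (p * \<sigma> - 1)) * epowr (inner_int h (sharp_f \<sigma> p \<epsilon>) y) p \<partial>lborel)"
    by (rule hardy_power_eq_log[OF hm sharp_f_measurable h_nonneg, symmetric]) (simp add: sharp_f_def)
  finally show ?thesis .
qed

lemma k1_shift_SUP: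
  assumes hm: "set_borel_measurable lborel {0<..} h" and h_nonneg: "\<forall>t>0. 0 \<le> h t" and "c > 0"
  shows "(SUP n. k1 h (\<sigma> + c / real (Suc n))) = k1 h \<sigma>"
proof -
  note [measurable] = borel_measurable_log_kernel[OF hm]
  define K where "K n w = ennreal (log_kernel h \<sigma> w * exp (c / real (Suc n) * w))" for n w
  have "incseq K"
  proof (intro incseq_SucI le_funI)
    fix n w
    show "K n w \<le> K (Suc n) w"
    proof (cases "w < 0")
      case True
      then have "c / real (Suc n) * w \<le> c / real (Suc (Suc n)) * w"
        using \<open>c > 0\<close> by (intro mult_right_mono_neg divide_left_mono) auto
      then show ?thesis
        unfolding K_def by (intro ennreal_leI mult_left_mono log_kernel_nonneg[OF h_nonneg]) simp
    qed (simp add: K_def log_kernel_def)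
  qed
  have "(\<lambda>n. K n w) \<longlonglongrightarrow> ennreal (log_kernel h \<sigma> w)" for w
  proof -
    have "(\<lambda>n. c * w * inverse (real (Suc n))) \<longlonglongrightarrow> c * w * 0"
      by (intro tendsto_mult tendsto_const LIMSEQ_inverse_real_of_nat)
    then have "(\<lambda>n. log_kernel h \<sigma> w * exp (c / real (Suc n) * w)) \<longlonglongrightarrow> log_kernel h \<sigma> w * exp 0"
      by (intro tendsto_mult tendsto_exp tendsto_const) (simp add: field_simps)
    then show ?thesis unfolding K_def by (intro tendsto_ennrealI) simp
  qed
  then have SUP_K: "(SUP n. K n w) = ennreal (log_kernel h \<sigma> w)" for w
    using \<open>incseq K\<close> by (intro LIMSEQ_unique[OF LIMSEQ_SUP]) (auto simp: incseq_def le_fun_def)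
  have "(SUP n. k1 h (\<sigma> + c / real (Suc n))) = (SUP n. \<integral>\<^sup>+w. K n w \<partial>lborel)"
    by (simp only: K_def log_kernel_mult_exp k1_eq_log[OF hm h_nonneg])
  also have "\<dots> = (\<integral>\<^sup>+w. (SUP n. K n w) \<partial>lborel)"
    by (rule nn_integral_monotone_convergence_SUP[symmetric, OF \<open>incseq K\<close>]) (unfold K_def, measurable)
  also have "\<dots> = k1 h \<sigma>"
    by (simp add: SUP_K k1_eq_log[OF hm h_nonneg])
  finally show ?thesis .
qed

lemma ennreal_less_of_less_enn2real:
  assumes "0 < k" "k < enn2real x"
  shows "ennreal k < x"
  using assms by (cases x) (auto simp: ennreal_less_iff)

lemma hardy_bilinear_sharp:
  assumes pq: "p > 1" "1/p + 1/q = 1"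
    and hm: "set_borel_measurable lborel {0<..} h" and h_nonneg: "\<forall>t>0. 0 \<le> h t"
    and k: "0 < k" "k < enn2real (k1 h \<sigma>)"
  shows "\<exists>f g. admissible p \<sigma> f \<and> admissible q \<sigma> g \<and>
    \<not> (\<integral>\<^sup>+y\<in>{0<..}. inner_int h f y * ennreal (g y) \<partial>lborel)
        < ennreal (k * enn2real (wint p \<sigma> f) powr (1/p) * enn2real (wint q \<sigma> g) powr (1/q))"
proof -
  have q: "q > 1" using conjugate_exponent_gt_1[OF pq] .
  have "ennreal k < k1 h \<sigma>" using ennreal_less_of_less_enn2real[OF k] .
  also have "k1 h \<sigma> = (SUP n. k1 h (\<sigma> + (1/p) / real (Suc n)))"
    using k1_shift_SUP[OF hm h_nonneg, of "1/p"] pq by simp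
  finally obtain n where n: "ennreal k < k1 h (\<sigma> + (1/p) / real (Suc n))"
    by (auto simp: less_SUP_iff)
  define \<epsilon> where "\<epsilon> = 1 / real (Suc n)"
  have \<epsilon>: "\<epsilon> > 0" and shift: "(1/p) / real (Suc n) = \<epsilon> / p" by (auto simp: \<epsilon>_def)
  have "(1/\<epsilon>) powr (1/p) * (1/\<epsilon>) powr (1/q) = 1/\<epsilon>"
    using pq \<epsilon> by (simp flip: powr_add)
  then have "ennreal (k * enn2real (wint p \<sigma> (sharp_f \<sigma> p \<epsilon>)) powr (1/p) * enn2real (wint q \<sigma> (sharp_g \<sigma> q \<epsilon>)) powr (1/q))
      = ennreal (1/\<epsilon>) * ennreal k"
    using admissible_sharp_f(2)[of p \<epsilon> \<sigma>] admissible_sharp_g(2)[of q \<epsilon> \<sigma>] pq q \<epsilon> k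
    by (simp add: mult_ac flip: ennreal_mult)
  also have "\<dots> \<le> ennreal (1/\<epsilon>) * k1 h (\<sigma> + \<epsilon> / p)"
    using n shift by (intro mult_left_mono) auto
  also have "\<dots> = (\<integral>\<^sup>+y\<in>{0<..}. inner_int h (sharp_f \<sigma> p \<epsilon>) y * ennreal (sharp_g \<sigma> q \<epsilon> y) \<partial>lborel)"
    by (rule bilinear_sharp[OF hm h_nonneg pq(2) \<epsilon>, symmetric])
  finally show ?thesis
    using admissible_sharp_f(1)[of p \<epsilon> \<sigma>] admissible_sharp_g(1)[of q \<epsilon> \<sigma>] pq q \<epsilon>
    by (intro exI[of _ "sharp_f \<sigma> p \<epsilon>"] exI[of _ "sharp_g \<sigma> q \<epsilon>"]) (simp add: not_less)
qed

lemma hardy_power_sharp: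
  assumes p: "p > 1"
    and hm: "set_borel_measurable lborel {0<..} h" and h_nonneg: "\<forall>t>0. 0 \<le> h t"
    and k: "0 < k" "k < enn2real (k1 h \<sigma>) powr p"
  shows "\<exists>f. admissible p \<sigma> f \<and>
    \<not> (\<integral>\<^sup>+y\<in>{0<..}. ennreal (y powr (p * \<sigma> - 1)) * epowr (inner_int h f y) p \<partial>lborel)
        < ennreal (k * enn2real (wint p \<sigma> f))"
proof -
  define c where "c = k powr (1/p)"
  have c: "c > 0" "c powr p = k" using k p by (simp_all add: c_def powr_powr)
  have "c < (enn2real (k1 h \<sigma>) powr p) powr (1/p)"
    unfolding c_def using k p by (intro powr_less_mono2) auto
  then have "ennreal c < k1 h \<sigma>"
    using c p by (intro ennreal_less_of_less_enn2real) (simp_all add: powr_powr)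
  also have SUP: "k1 h \<sigma> = (SUP n. k1 h (\<sigma> + (1/p) / real (Suc n)))"
    using k1_shift_SUP[OF hm h_nonneg, of "1/p"] p by simp
  finally obtain n where n: "ennreal c < k1 h (\<sigma> + (1/p) / real (Suc n))"
    by (auto simp: less_SUP_iff)
  define \<epsilon> where "\<epsilon> = 1 / real (Suc n)"
  have \<epsilon>: "\<epsilon> > 0" and shift: "(1/p) / real (Suc n) = \<epsilon> / p" by (auto simp: \<epsilon>_def)
  have "k1 h (\<sigma> + \<epsilon> / p) \<le> k1 h \<sigma>"
    unfolding SUP shift[symmetric] by (rule SUP_upper) simp
  also have "k1 h \<sigma> < \<infinity>"
    using k p by (cases "k1 h \<sigma>") auto
  finally have "k \<le> enn2real (k1 h (\<sigma> + \<epsilon> / p)) powr p"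
    using n c p shift by (cases "k1 h (\<sigma> + \<epsilon> / p)") (auto simp: ennreal_less_iff intro!: powr_mono2)
  then have "ennreal (k * enn2real (wint p \<sigma> (sharp_f \<sigma> p \<epsilon>))) \<le> ennreal (1/\<epsilon>) * epowr (k1 h (\<sigma> + \<epsilon> / p)) p"
    using admissible_sharp_f(2)[of p \<epsilon> \<sigma>] p \<epsilon> k
    by (auto simp: epowr_def mult.commute ennreal_mult[symmetric] intro!: ennreal_leI divide_right_mono)
  also have "\<dots> \<le> (\<integral>\<^sup>+y\<in>{0<..}. ennreal (y powr (p * \<sigma> - 1)) * epowr (inner_int h (sharp_f \<sigma> p \<epsilon>) y) p \<partial>lborel)"
    using p \<epsilon> by (intro hardy_power_sharp_ge[OF hm h_nonneg]) auto
  finally show ?thesis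
    using admissible_sharp_f(1)[of p \<epsilon> \<sigma>] p \<epsilon> by (intro exI[of _ "sharp_f \<sigma> p \<epsilon>"]) (simp add: not_less)
qed

theorem corollary4:
  fixes p q \<sigma> :: real and h :: "real \<Rightarrow> real"
  assumes "p > 1" and "1 / p + 1 / q = 1"
    and "set_borel_measurable lborel {0<..} h" and "\<forall>t>0. 0 \<le> h t"
    and "0 < k1 h \<sigma>" and "k1 h \<sigma> < \<infinity>"
  shows
    "(\<forall>f g. admissible p \<sigma> f \<and> admissible q \<sigma> g \<longrightarrow>
        (\<integral>\<^sup>+ y\<in>{0<..}. inner_int h f y * ennreal (g y) \<partial>lborel)
          = (\<integral>\<^sup>+ x\<in>{0<..}. inner_int h g x * ennreal (f x) \<partial>lborel)
      \<and> (\<integral>\<^sup>+ y\<in>{0<..}. inner_int h f y * ennreal (g y) \<partial>lborel)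
          < ennreal (enn2real (k1 h \<sigma>) * enn2real (wint p \<sigma> f) powr (1 / p)
                      * enn2real (wint q \<sigma> g) powr (1 / q)))
   \<and> (\<forall>f. admissible p \<sigma> f \<longrightarrow>
        (\<integral>\<^sup>+ y\<in>{0<..}. ennreal (y powr (p * \<sigma> - 1)) * epowr (inner_int h f y) p \<partial>lborel)
          < ennreal (enn2real (k1 h \<sigma>) powr p * enn2real (wint p \<sigma> f)))
   \<and> (\<forall>k. 0 < k \<and> k < enn2real (k1 h \<sigma>) \<longrightarrow>
        (\<exists>f g. admissible p \<sigma> f \<and> admissible q \<sigma> g \<and>
          \<not> ((\<integral>\<^sup>+ y\<in>{0<..}. inner_int h f y * ennreal (g y) \<partial>lborel)
               < ennreal (k * enn2real (wint p \<sigma> f) powr (1 / p)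
                            * enn2real (wint q \<sigma> g) powr (1 / q)))))
   \<and> (\<forall>k. 0 < k \<and> k < enn2real (k1 h \<sigma>) powr p \<longrightarrow>
        (\<exists>f. admissible p \<sigma> f \<and>
          \<not> ((\<integral>\<^sup>+ y\<in>{0<..}. ennreal (y powr (p * \<sigma> - 1)) * epowr (inner_int h f y) p \<partial>lborel)
               < ennreal (k * enn2real (wint p \<sigma> f)))))"
proof -
  note pq = assms(1,2) and hm = assms(3) and h_nonneg = assms(4) and k1 = assms(5,6)
  have "(\<integral>\<^sup>+y\<in>{0<..}. inner_int h f y * ennreal (g y) \<partial>lborel)
      = (\<integral>\<^sup>+x\<in>{0<..}. inner_int h g x * ennreal (f x) \<partial>lborel)"
    if "admissible p \<sigma> f" "admissible q \<sigma> g" for f g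
    using that by (intro hardy_bilinear_symmetric[OF hm _ _ h_nonneg]) (auto simp: admissible_def)
  then show ?thesis
    using hardy_bilinear_less[OF pq hm h_nonneg k1] hardy_power_less[OF pq(1) hm h_nonneg k1]
      hardy_bilinear_sharp[OF pq hm h_nonneg] hardy_power_sharp[OF pq(1) hm h_nonneg]
    by blast
qed

end
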